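(* Let $N\ge1$, $p\ge2$, $w,g\in L^1_{loc}(\mathbb{R}^N)$ positive a.e. with $g^{-1}\in L^\infty(\mathbb{R}^N)$. Let $\delta=\gamma\ge1$ with $(\delta,p)$ in the class $P_a$. Assume there exist constants $\lambda>0$ and $C>0$ such that $\lambda<pS_p^a$ and $\int_{B_{2R}(0)}w^{S_p^a}dx\le CR^{\lambda}$ for all $R\ge1$. Then there is no $u\in C^1(\mathbb{R}^N)$ with $u>0$ in $\mathbb{R}^N$ which is a stable weak solution of $\operatorname{div}(w|\nabla u|^{p-2}\nabla u)=g(x)(u^{-\delta}+u^{-\gamma})$ in $\mathbb{R}^N$.
   Context: Weak solution and stability are with respect to $f(t)=-t^{-\delta}-t^{-\gamma}$ and the equation $-\operatorname{div}(w|\nabla u|^{p-2}\nabla u)=gf(u)$: $u\in C^1$ is a weak solution if $\int w|\nabla u|^{p-2}\nabla u\cdot\nabla\varphi=\int gf(u)\varphi$ for all $\varphi\in C^1_c(\mathbb{R}^N)$; it is stable if for all $\varphi\in C^1_c(\mathbb{R}^N)$, $\int w|\nabla u|^{p-2}|\nabla\varphi|^2+(p-2)\int w|\nabla u|^{p-4}(\nabla u\cdot\nabla\varphi)^2-\int gf'(u)\varphi^2\ge0$ (middle integrand $=0$ where $\nabla u=0$). Class $P_a$: $(\delta,p)\in P_a$ if either $2\le p<3$ and $\delta\ge1$, or $p=3$ and $\delta>1$, or $p>3$ and $\delta>\frac{(p-1)^2}{4}$. $s_p=\delta+\sqrt{\delta^2+\delta}$ if $p=2$, $s_p=\frac{2\delta}{p-1}-\frac{p-1}{2}$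 if $p>2$; $S_p^a=1+\frac{2s_p}{p-1+\delta}$. $B_r(0)$ is the open ball of radius $r$ centered at the origin. *)

theory Defs
  imports "HOL-Analysis.Analysis"
begin

definition grad :: "('a::euclidean_space \<Rightarrow> real) \<Rightarrow> 'a \<Rightarrow> 'a" where
  "grad u x = (\<Sum>b\<in>Basis. frechet_derivative u (at x) b *\<^sub>R b)"

definition C1_fun :: "('a::euclidean_space \<Rightarrow> real) \<Rightarrow> bool" where
  "C1_fun u \<longleftrightarrow> (\<forall>x. u differentiable (at x)) \<and> continuous_on UNIV (grad u)"

definition C1c_fun :: "('a::euclidean_space \<Rightarrow> real) \<Rightarrow> bool" where
  "C1c_fun \<phi> \<longleftrightarrow> C1_fun \<phi> \<and> compact (closure {x. \<phi> x \<noteq> 0})"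

text \<open>Power t^a for t \<ge> 0, a \<ge> 0, with the convention t^0 = 1 (also for t = 0).\<close>
definition rpow :: "real \<Rightarrow> real \<Rightarrow> real" where
  "rpow t a = (if a = 0 then 1 else t powr a)"

definition fsing :: "real \<Rightarrow> real \<Rightarrow> real \<Rightarrow> real" where
  "fsing \<delta> \<gamma> t = - (t powr (-\<delta>)) - t powr (-\<gamma>)"

definition fsing' :: "real \<Rightarrow> real \<Rightarrow> real \<Rightarrow> real" where
  "fsing' \<delta> \<gamma> t = \<delta> * t powr (-\<delta> - 1) + \<gamma> * t powr (-\<gamma> - 1)"

text \<open>Weak solution of -div(w |\<nabla>u|^(p-2) \<nabla>u) = g f(u).\<close>
definition weak_solution ::
  "real \<Rightarrow> real \<Rightarrow> real \<Rightarrow> ('a::euclidean_space \<Rightarrow> real) \<Rightarrow> ('a \<Rightarrow> real) \<Rightarrow> ('a \<Rightarrow> real) \<Rightarrow> bool" where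
  "weak_solution p \<delta> \<gamma> w g u \<longleftrightarrow> C1_fun u \<and>
     (\<forall>\<phi>. C1c_fun \<phi> \<longrightarrow>
        (\<integral>x. w x * rpow (norm (grad u x)) (p - 2) * (grad u x \<bullet> grad \<phi> x) \<partial>lebesgue)
        = (\<integral>x. g x * fsing \<delta> \<gamma> (u x) * \<phi> x \<partial>lebesgue))"

definition stable_solution ::
  "real \<Rightarrow> real \<Rightarrow> real \<Rightarrow> ('a::euclidean_space \<Rightarrow> real) \<Rightarrow> ('a \<Rightarrow> real) \<Rightarrow> ('a \<Rightarrow> real) \<Rightarrow> bool" where
  "stable_solution p \<delta> \<gamma> w g u \<longleftrightarrow>
     (\<forall>\<phi>. C1c_fun \<phi> \<longrightarrow>
        (\<integral>x. w x * rpow (norm (grad u x)) (p - 2) * (norm (grad \<phi> x))\<^sup>2 \<partial>lebesgue)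
        + (p - 2) * (\<integral>x. (if grad u x = 0 then 0
              else w x * norm (grad u x) powr (p - 4) * (grad u x \<bullet> grad \<phi> x)\<^sup>2) \<partial>lebesgue)
        - (\<integral>x. g x * fsing' \<delta> \<gamma> (u x) * (\<phi> x)\<^sup>2 \<partial>lebesgue) \<ge> 0)"

definition class_Pa :: "real \<Rightarrow> real \<Rightarrow> bool" where
  "class_Pa \<delta> p \<longleftrightarrow> (2 \<le> p \<and> p < 3 \<and> \<delta> \<ge> 1) \<or> (p = 3 \<and> \<delta> > 1) \<or> (p > 3 \<and> \<delta> > (p - 1)\<^sup>2 / 4)"

definition s_p :: "real \<Rightarrow> real \<Rightarrow> real" where
  "s_p \<delta> p = (if p = 2 then \<delta> + sqrt (\<delta>\<^sup>2 + \<delta>) else 2 * \<delta> / (p - 1) - (p - 1) / 2)"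

definition S_pa :: "real \<Rightarrow> real \<Rightarrow> real" where
  "S_pa \<delta> p = 1 + 2 * s_p \<delta> p / (p - 1 + \<delta>)"

end

theory Submission
  imports Defs
begin

text \<open>
  Suppose \<open>u > 0\<close> were a stable weak solution. Test the equation with
  \<open>u^-(2\<alpha>+1) \<psi>\<^sub>R\<^sup>2\<close> and the stability inequality with \<open>u^-\<alpha> \<psi>\<^sub>R\<close>, where
  \<open>\<psi>\<^sub>R = (max 0 (1 - |x|\<^sup>2/(4R\<^sup>2)))^k\<close>. Eliminating the mixed terms by Young's inequality
  gives \<open>\<integral> g u^-(\<delta>+2\<alpha>+1) \<psi>\<^sub>R\<^sup>2 \<le> K R^(-pS) \<integral>\<^sub>B\<^sub>2\<^sub>R w^S\<close> with
  \<open>S = (\<delta>+2\<alpha>+1)/(\<delta>+p-1)\<close>, as long as \<open>\<delta>(2\<alpha>+1) > (p-1)\<alpha>\<^sup>2\<close> and \<open>2\<alpha>+2 > p\<close>.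
  Membership in \<open>P\<^sub>a\<close> is what allows such an \<open>\<alpha>\<close> with \<open>S = S\<^sub>p\<^sup>a\<close> (for \<open>p > 2\<close>), or \<open>S\<close>
  arbitrarily close to \<open>S\<^sub>p\<^sup>a\<close> (for \<open>p = 2\<close>). Splitting \<open>w^S\<close> at the level \<open>R^-(N+1)\<close> and
  using the growth bound for \<open>w^S\<^sub>p\<^sup>a\<close>, the right-hand side tends to \<open>0\<close> as \<open>R \<rightarrow> \<infinity>\<close>,
  while the left-hand side is positive and nondecreasing in \<open>R\<close>.
\<close>

section \<open>Gradients\<close>

definition has_grad :: "('a::euclidean_space \<Rightarrow> real) \<Rightarrow> 'a \<Rightarrow> 'a \<Rightarrow> bool" where
  "has_grad f v x \<longleftrightarrow> (f has_derivative (\<lambda>h. v \<bullet> h)) (at x)"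

lemma grad_eqI: assumes "has_grad f v x" shows "grad f x = v"
proof -
  have "frechet_derivative f (at x) = (\<lambda>h. v \<bullet> h)"
    using frechet_derivative_at assms unfolding has_grad_def by metis
  then have "grad f x = (\<Sum>b\<in>Basis. (v \<bullet> b) *\<^sub>R b)" unfolding grad_def by (simp add: inner_commute)
  then show ?thesis by (simp add: euclidean_representation)
qed

lemma has_grad_grad: assumes "f differentiable (at x)" shows "has_grad f (grad f x) x"
proof -
  let ?F = "frechet_derivative f (at x)"
  have d: "(f has_derivative ?F) (at x)" using assms frechet_derivative_works by blast
  then have lin: "linear ?F" using has_derivative_linear by blast
  have "?F h = grad f x \<bullet> h" for h
  proof -
    have "?F h = ?F (\<Sum>b\<in>Basis. (h \<bullet> b) *\<^sub>R b)" by (simp add: euclidean_representation)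
    also have "\<dots> = (\<Sum>b\<in>Basis. (h \<bullet> b) * ?F b)" using lin by (simp add: linear_sum linear_scale)
    also have "\<dots> = grad f x \<bullet> h" unfolding grad_def inner_sum_left
      by (auto intro!: sum.cong simp: inner_commute)
    finally show ?thesis .
  qed
  then have "?F = (\<lambda>h. grad f x \<bullet> h)" by auto
  then show ?thesis using d unfolding has_grad_def by simp
qed

lemma has_grad_differentiable: "has_grad f v x \<Longrightarrow> f differentiable (at x)"
  unfolding has_grad_def differentiable_def by blast

lemma has_grad_mult:
  assumes "has_grad f v x" "has_grad g w x"
  shows "has_grad (\<lambda>y. f y * g y) (f x *\<^sub>R w + g x *\<^sub>R v) x"
proof -
  have "((\<lambda>y. f y * g y) has_derivative (\<lambda>h. f x * (w \<bullet> h) + (v \<bullet> h) * g x)) (at x)"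
    using has_derivative_mult[OF assms[unfolded has_grad_def]] by simp
  then show ?thesis unfolding has_grad_def
    by (rule has_derivative_eq_rhs) (auto simp: inner_add_left algebra_simps)
qed

lemma has_grad_compose:
  assumes "has_grad f v x" "(h has_real_derivative d) (at (f x))"
  shows "has_grad (\<lambda>y. h (f y)) (d *\<^sub>R v) x"
proof -
  have "((\<lambda>y. h (f y)) has_derivative (\<lambda>t. d * t) \<circ> (\<lambda>k. v \<bullet> k)) (at x)"
    using has_derivative_compose[OF assms(1)[unfolded has_grad_def] assms(2)[unfolded has_field_derivative_def]]
    by (simp add: o_def)
  then show ?thesis unfolding has_grad_def
    by (rule has_derivative_eq_rhs) (auto simp: o_def)
qed

lemma has_grad_power2_norm: "has_grad (\<lambda>y. (norm y)^2) (2 *\<^sub>R x) x"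
proof -
  have "((\<lambda>y. y \<bullet> y) has_derivative (\<lambda>h. x \<bullet> h + h \<bullet> x)) (at x)"
    by (rule has_derivative_inner[OF has_derivative_ident has_derivative_ident])
  then show ?thesis unfolding has_grad_def power2_norm_eq_inner
    by (rule has_derivative_eq_rhs) (auto simp: inner_commute)
qed

lemma C1_fun_has_grad: "C1_fun u \<Longrightarrow> has_grad u (grad u x) x"
  unfolding C1_fun_def by (simp add: has_grad_grad)

lemma C1_fun_continuous_on: "C1_fun u \<Longrightarrow> continuous_on UNIV u"
  unfolding C1_fun_def
  by (intro differentiable_imp_continuous_on) (simp add: differentiable_on_def differentiable_at_withinI)

lemma C1_fun_grad_continuous_on: "C1_fun u \<Longrightarrow> continuous_on UNIV (grad u)"
  unfolding C1_fun_def by simp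

section \<open>Cut-off functions\<close>

lemma has_real_derivative_max0_power_at_0:
  assumes k: "k \<ge> 2"
  shows "((\<lambda>t::real. (max 0 t)^k) has_real_derivative 0) (at 0)"
proof -
  have "((\<lambda>h::real. ((max 0 (0 + h))^k - (max 0 0)^k) / h) \<longlongrightarrow> 0) (at 0)"
  proof (rule Lim_null_comparison)
    have "\<forall>\<^sub>F h in at (0::real). h \<in> ball 0 1 \<and> h \<noteq> 0 \<and> h \<in> UNIV"
      by (rule eventually_at_ball') simp
    then show "\<forall>\<^sub>F h in at (0::real). norm (((max 0 (0 + h))^k - (max 0 0)^k) / h) \<le> \<bar>h\<bar>"
    proof eventually_elim
      case (elim h)
      have "\<bar>(max 0 h)^k\<bar> = \<bar>max 0 h\<bar>^k" by (simp add: power_abs)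
      also have "\<dots> \<le> \<bar>h\<bar>^k" by (simp add: power_mono)
      also have "\<dots> \<le> \<bar>h\<bar>^2" using elim k by (intro power_decreasing) auto
      finally have "\<bar>(max 0 h)^k\<bar> \<le> \<bar>h\<bar> * \<bar>h\<bar>" by (simp add: power2_eq_square)
      then show ?case using elim k by (simp add: abs_divide divide_le_eq power_0_left)
    qed
    show "((\<lambda>h::real. \<bar>h\<bar>) \<longlongrightarrow> 0) (at 0)"
      using tendsto_rabs[OF tendsto_ident_at[of "0::real" UNIV]] by simp
  qed
  then show ?thesis unfolding DERIV_def by simp
qed

lemma has_real_derivative_max0_power:
  assumes k: "k \<ge> 2"
  shows "((\<lambda>t::real. (max 0 t)^k) has_real_derivative (real k * (max 0 t)^(k-1))) (at t)"
proof -
  consider "t > 0" | "t < 0" | "t = 0" by linarith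
  then show ?thesis
  proof cases
    case 1
    have "((\<lambda>t::real. t^k) has_real_derivative (real k * t^(k-1))) (at t)"
      using DERIV_pow[of k t] by simp
    then have "((\<lambda>t::real. (max 0 t)^k) has_real_derivative (real k * t^(k-1))) (at t)"
      by (rule has_field_derivative_transform_within_open[where S="{0<..}"]) (use 1 in auto)
    then show ?thesis using 1 by simp
  next
    case 2
    have "((\<lambda>t::real. 0) has_real_derivative 0) (at t)" by simp
    then have "((\<lambda>t::real. (max 0 t)^k) has_real_derivative 0) (at t)"
      by (rule has_field_derivative_transform_within_open[where S="{..<0}"]) (use 2 k in auto)
    then show ?thesis using 2 k by (simp add: power_0_left)
  next
    case 3
    then show ?thesis using has_real_derivative_max0_power_at_0[OF k] k by (simp add: power_0_left)
  qed
qed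

definition cutoff :: "real \<Rightarrow> 'a::euclidean_space \<Rightarrow> real" where
  "cutoff R x = max 0 (1 - (norm x)^2 / (4*R^2))"

definition cutoff_pow :: "nat \<Rightarrow> real \<Rightarrow> 'a::euclidean_space \<Rightarrow> real" where
  "cutoff_pow k R x = cutoff R x ^ k"

definition grad_cutoff_pow :: "nat \<Rightarrow> real \<Rightarrow> 'a::euclidean_space \<Rightarrow> 'a" where
  "grad_cutoff_pow k R x = (- real k * cutoff R x ^ (k-1) / (2*R^2)) *\<^sub>R x"

lemma has_grad_cutoff_pow:
  assumes k: "k \<ge> 2" and R: "R > 0"
  shows "has_grad (cutoff_pow k R) (grad_cutoff_pow k R x) x"
proof -
  have h1: "has_grad (\<lambda>y. 1 - (norm y)^2 / (4*R^2)) ((- 1/(4*R^2)) *\<^sub>R (2 *\<^sub>R x)) x"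
  proof (rule has_grad_compose[OF has_grad_power2_norm, where h="\<lambda>t. 1 - t/(4*R^2)"])
    show "((\<lambda>t. 1 - t / (4 * R\<^sup>2)) has_real_derivative - 1 / (4 * R\<^sup>2)) (at ((norm x)^2))"
      using R by (auto intro!: derivative_eq_intros simp: eval_nat_numeral field_simps)
  qed
  have "has_grad (\<lambda>y. (max 0 (1 - (norm y)^2 / (4*R^2)))^k)
      ((real k * (max 0 (1 - (norm x)^2 / (4*R^2)))^(k-1)) *\<^sub>R ((- 1/(4*R^2)) *\<^sub>R (2 *\<^sub>R x))) x"
    by (rule has_grad_compose[OF h1 has_real_derivative_max0_power[OF k]])
  then show ?thesis unfolding cutoff_pow_def cutoff_def grad_cutoff_pow_def
    using R by (simp add: field_simps)
qed

lemma cutoff_range: "0 \<le> cutoff R x" "cutoff R x \<le> 1"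
  unfolding cutoff_def by (auto simp: field_simps)

lemma cutoff_eq_0: assumes "R > 0" "norm x \<ge> 2*R" shows "cutoff R x = 0"
proof -
  have "(2*R)^2 \<le> (norm x)^2" using assms by (intro power_mono) auto
  then have "4*R^2 \<le> (norm x)^2" by (simp add: power_mult_distrib)
  then show ?thesis unfolding cutoff_def using assms by (simp add: field_simps)
qed

lemma norm_less_if_cutoff_pos: assumes "R > 0" "cutoff R x > 0" shows "norm x < 2*R"
  using cutoff_eq_0[OF assms(1), of x] assms by force

lemma cutoff_mono: assumes "0 < R" "R \<le> R'" shows "cutoff R x \<le> cutoff R' x"
proof -
  have "R^2 \<le> R'^2" using assms by (intro power_mono) auto
  then have "(norm x)^2 / (4*R'^2) \<le> (norm x)^2 / (4*R^2)"
    using assms by (intro divide_left_mono) auto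
  then show ?thesis unfolding cutoff_def by auto
qed

lemma cutoff_ge_three_quarters: assumes "1 \<le> R" "norm x < 1" shows "cutoff R x \<ge> 3/4"
proof -
  have "(norm x)^2 \<le> 1" using assms by (simp add: power_le_one)
  moreover have "1 \<le> R^2" using assms by (simp add: one_le_power)
  ultimately have "(norm x)^2 / (4*R^2) \<le> 1/4" by (simp add: divide_le_eq)
  then show ?thesis unfolding cutoff_def by auto
qed

lemma norm_grad_cutoff_pow_le:
  assumes k: "k \<ge> 2" and R: "R > 0"
  shows "norm (grad_cutoff_pow k R x) \<le> real k * cutoff R x ^ (k-1) / R"
proof (cases "cutoff R x > 0")
  case True
  have nx: "norm x \<le> 2*R" using norm_less_if_cutoff_pos[OF R True] by simp
  have "norm (grad_cutoff_pow k R x) = real k * cutoff R x ^ (k-1) / (2*R^2) * norm x"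
    unfolding grad_cutoff_pow_def using cutoff_range[of R x] by (simp add: abs_mult)
  also have "\<dots> \<le> real k * cutoff R x ^ (k-1) / (2*R^2) * (2*R)"
    using nx cutoff_range[of R x] R by (intro mult_left_mono) auto
  also have "\<dots> = real k * cutoff R x ^ (k-1) / R" using R by (simp add: power2_eq_square field_simps)
  finally show ?thesis .
next
  case False
  then have "cutoff R x = 0" using cutoff_range[of R x] by auto
  moreover have "(0::real) ^ (k - Suc 0) = 0" using k by simp
  ultimately show ?thesis unfolding grad_cutoff_pow_def using k by (simp add: power_0_left)
qed

lemma continuous_on_cutoff: "R > 0 \<Longrightarrow> continuous_on UNIV (cutoff R)"
  unfolding cutoff_def by (intro continuous_intros) auto

lemma continuous_on_grad_cutoff_pow: "R > 0 \<Longrightarrow> continuous_on UNIV (grad_cutoff_pow k R)"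
  unfolding grad_cutoff_pow_def by (intro continuous_intros continuous_on_cutoff) auto

lemma support_cutoff_pow_subset: assumes "R > 0" "k \<ge> 1" shows "closure {x. cutoff_pow k R x \<noteq> 0} \<subseteq> cball 0 (2*R)"
proof -
  have "{x. cutoff_pow k R x \<noteq> 0} \<subseteq> cball 0 (2*R)"
  proof
    fix x assume "x \<in> {x. cutoff_pow k R x \<noteq> 0}"
    then have "cutoff R x \<noteq> 0" unfolding cutoff_pow_def using assms(2) by (auto simp: power_0_left)
    then show "x \<in> cball 0 (2*R)" using cutoff_eq_0[OF assms(1), of x] by force
  qed
  then show ?thesis by (intro closure_minimal) auto
qed

lemma continuous_on_cutoff_pow: "R > 0 \<Longrightarrow> continuous_on UNIV (cutoff_pow k R)"
  unfolding cutoff_pow_def by (intro continuous_intros continuous_on_cutoff)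

section \<open>Test functions\<close>

definition test_grad :: "('a::euclidean_space \<Rightarrow> real) \<Rightarrow> real \<Rightarrow> nat \<Rightarrow> nat \<Rightarrow> real \<Rightarrow> 'a \<Rightarrow> 'a" where
  "test_grad u \<beta> j k R x = (u x powr \<beta>) *\<^sub>R ((real j * cutoff_pow k R x^(j-1)) *\<^sub>R grad_cutoff_pow k R x)
       + (cutoff_pow k R x ^ j) *\<^sub>R ((\<beta> * u x powr (\<beta> - 1)) *\<^sub>R grad u x)"

lemma has_grad_test_fun:
  assumes u: "C1_fun u" "\<forall>x. u x > 0" and k: "k \<ge> 2" and R: "R > 0"
  shows "has_grad (\<lambda>x. u x powr \<beta> * cutoff_pow k R x ^ j) (test_grad u \<beta> j k R x) x"
proof -
  have a: "has_grad (\<lambda>x. u x powr \<beta>) ((\<beta> * u x powr (\<beta> - 1)) *\<^sub>R grad u x) x"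
    by (rule has_grad_compose[OF C1_fun_has_grad[OF u(1)] has_real_derivative_powr]) (use u in auto)
  have b: "has_grad (\<lambda>x. cutoff_pow k R x ^ j) ((real j * cutoff_pow k R x^(j-1)) *\<^sub>R grad_cutoff_pow k R x) x"
    by (rule has_grad_compose[OF has_grad_cutoff_pow[OF k R], where h="\<lambda>t. t^j"]) (use DERIV_pow[of j "cutoff_pow k R x"] in \<open>simp only: One_nat_def\<close>)
  show ?thesis using has_grad_mult[OF a b] unfolding test_grad_def by simp
qed

lemma test_fun_C1c:
  assumes u: "C1_fun u" "\<forall>x. u x > 0" and k: "k \<ge> 2" and R: "R > 0" and j: "j \<ge> 1"
  shows "C1c_fun (\<lambda>x. u x powr \<beta> * cutoff_pow k R x ^ j)"
    "grad (\<lambda>x. u x powr \<beta> * cutoff_pow k R x ^ j) = test_grad u \<beta> j k R"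
proof -
  show g: "grad (\<lambda>x. u x powr \<beta> * cutoff_pow k R x ^ j) = test_grad u \<beta> j k R"
    using grad_eqI[OF has_grad_test_fun[OF assms(1-4)]] by auto
  have cu: "continuous_on UNIV u" by (rule C1_fun_continuous_on[OF u(1)])
  have upos: "\<forall>x\<in>UNIV. u x \<noteq> 0" using u(2) by (simp add: less_imp_neq[symmetric])
  have cont: "continuous_on UNIV (test_grad u \<beta> j k R)"
    unfolding test_grad_def
    by (intro continuous_intros cu continuous_on_cutoff_pow[OF R] continuous_on_grad_cutoff_pow[OF R] C1_fun_grad_continuous_on[OF u(1)])
       (use upos in auto)
  have C1: "C1_fun (\<lambda>x. u x powr \<beta> * cutoff_pow k R x ^ j)"
    unfolding C1_fun_def g using has_grad_differentiable[OF has_grad_test_fun[OF assms(1-4)]] cont by auto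
  have sub: "{x. u x powr \<beta> * cutoff_pow k R x ^ j \<noteq> 0} \<subseteq> {x. cutoff_pow k R x \<noteq> 0}" using j by auto
  have "closure {x. u x powr \<beta> * cutoff_pow k R x ^ j \<noteq> 0} \<subseteq> cball 0 (2*R)"
    using closure_mono[OF sub] support_cutoff_pow_subset[OF R, of k] k by auto
  then have "bounded (closure {x. u x powr \<beta> * cutoff_pow k R x ^ j \<noteq> 0})"
    by (rule bounded_subset[OF bounded_cball])
  then have "compact (closure {x. u x powr \<beta> * cutoff_pow k R x ^ j \<noteq> 0})"
    using compact_eq_bounded_closed closed_closure by blast
  then show "C1c_fun (\<lambda>x. u x powr \<beta> * cutoff_pow k R x ^ j)" unfolding C1c_fun_def using C1 by auto
qed

section \<open>Local integrability\<close>

lemma continuous_on_lebesgue_measurable: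
  fixes h :: "'a::euclidean_space \<Rightarrow> 'b::euclidean_space"
  shows "continuous_on UNIV h \<Longrightarrow> h \<in> borel_measurable lebesgue"
  using continuous_imp_measurable_on_sets_lebesgue[of UNIV h] by (simp add: lebesgue_on_UNIV_eq)

lemma locally_integrable_measurable:
  fixes f :: "'a::euclidean_space \<Rightarrow> real"
  assumes loc: "\<forall>K. compact K \<longrightarrow> set_integrable lebesgue K f"
  shows "f \<in> borel_measurable lebesgue"
proof (rule borel_measurable_LIMSEQ_real)
  fix n :: nat
  have "set_integrable lebesgue (cball 0 (real n)) f" using loc by auto
  then show "(\<lambda>x. indicator (cball 0 (real n)) x * f x) \<in> borel_measurable lebesgue"
    unfolding set_integrable_def by (simp add: borel_measurable_integrable)
next
  fix x :: 'a
  have "\<forall>\<^sub>F n in sequentially. indicator (cball 0 (real n)) x * f x = f x"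
    unfolding eventually_sequentially
  proof (intro exI allI impI)
    fix n assume "nat \<lceil>norm x\<rceil> \<le> n"
    then have "norm x \<le> real n" by linarith
    then show "indicator (cball 0 (real n)) x * f x = f x" by (simp add: indicator_def)
  qed
  then show "(\<lambda>n. indicator (cball 0 (real n)) x * f x) \<longlonglongrightarrow> f x"
    by (rule tendsto_eventually)
qed

lemma integrable_mult_compact_support:
  fixes f :: "'a::euclidean_space \<Rightarrow> real"
  assumes loc: "\<forall>K. compact K \<longrightarrow> set_integrable lebesgue K f"
    and hc: "continuous_on UNIV h" and hz: "\<And>x. norm x > r \<Longrightarrow> h x = 0"
  shows "integrable lebesgue (\<lambda>x. f x * h x)"
proof -
  have "compact (h ` cball 0 r)" by (rule compact_continuous_image[OF continuous_on_subset[OF hc]]) auto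
  then obtain B where B: "\<And>y. y \<in> h ` cball 0 r \<Longrightarrow> norm y \<le> B"
    using compact_imp_bounded bounded_iff by metis
  have si: "set_integrable lebesgue (cball 0 r) f" using loc by auto
  then have i1: "integrable lebesgue (\<lambda>x. B * (indicator (cball 0 r) x * f x))"
    unfolding set_integrable_def by simp
  show ?thesis
  proof (rule Bochner_Integration.integrable_bound[OF i1])
    show "(\<lambda>x. f x * h x) \<in> borel_measurable lebesgue"
      using locally_integrable_measurable[OF loc] continuous_on_lebesgue_measurable[OF hc] by measurable
    show "AE x in lebesgue. norm (f x * h x) \<le> norm (B * (indicator (cball 0 r) x * f x))"
    proof (intro AE_I2)
      fix x
      show "norm (f x * h x) \<le> norm (B * (indicator (cball 0 r) x * f x))"
      proof (cases "norm x \<le> r")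
        case True
        then have "\<bar>h x\<bar> \<le> B" using B[of "h x"] by auto
        then have "\<bar>f x\<bar> * \<bar>h x\<bar> \<le> \<bar>f x\<bar> * \<bar>B\<bar>" by (intro mult_left_mono) auto
        then show ?thesis using True by (simp add: indicator_def abs_mult mult.commute)
      next
        case False
        then show ?thesis using hz[of x] by simp
      qed
    qed
  qed
qed

section \<open>Young-type inequalities\<close>

lemma powr_eq_exp_ln: "(x::real) > 0 \<Longrightarrow> x powr s = exp (s * ln x)"
  by (simp add: powr_def)

lemma power_eq_exp_ln: "(x::real) > 0 \<Longrightarrow> x ^ n = exp (real n * ln x)"
  by (metis exp_ln exp_of_nat_mult)

definition young_const :: "real \<Rightarrow> real \<Rightarrow> real" where
  "young_const \<theta> \<epsilon> = (1-\<theta>) * (\<epsilon>/\<theta>) powr (-\<theta>/(1-\<theta>))"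

lemma young_const_nonneg: "\<theta> < 1 \<Longrightarrow> 0 \<le> young_const \<theta> \<epsilon>"
  unfolding young_const_def by simp

lemma young_ineq_eps:
  fixes T1 T2 \<theta> \<epsilon> :: real
  assumes "0 \<le> T1" "0 \<le> T2" "0 < \<theta>" "\<theta> < 1" "0 < \<epsilon>"
  shows "T1 powr \<theta> * T2 powr (1-\<theta>) \<le> \<epsilon> * T1 + young_const \<theta> \<epsilon> * T2"
proof (cases "T1 = 0 \<or> T2 = 0")
  case True
  have "0 \<le> young_const \<theta> \<epsilon> * T2" using assms young_const_nonneg by auto
  then show ?thesis using True assms by auto
next
  case False
  then have p1: "T1 > 0" "T2 > 0" using assms by auto
  define c where "c = \<epsilon>/\<theta>"
  have c: "c > 0" unfolding c_def using assms by auto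
  have "(c*T1) powr \<theta> * (c powr (-\<theta>/(1-\<theta>)) * T2) powr (1-\<theta>)
       = c powr \<theta> * c powr (-\<theta>) * (T1 powr \<theta> * T2 powr (1-\<theta>))"
    using c p1 assms by (simp add: powr_mult powr_powr)
  also have "\<dots> = T1 powr \<theta> * T2 powr (1-\<theta>)"
    using c by (simp add: powr_add[symmetric])
  finally have eq: "T1 powr \<theta> * T2 powr (1-\<theta>)
      = (c*T1) powr \<theta> * (c powr (-\<theta>/(1-\<theta>)) * T2) powr (1-\<theta>)" by simp
  have "(c*T1) powr \<theta> * (c powr (-\<theta>/(1-\<theta>)) * T2) powr (1-\<theta>)
      \<le> \<theta> * (c*T1) + (1-\<theta>) * (c powr (-\<theta>/(1-\<theta>)) * T2)"
    by (rule Youngs_inequality_0) (use assms c p1 in auto)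
  also have "\<dots> = \<epsilon> * T1 + young_const \<theta> \<epsilon> * T2"
    unfolding c_def young_const_def using assms by (simp add: field_simps)
  finally show ?thesis using eq by simp
qed

text \<open>Taking logarithms turns the products of powers below into exponentials of linear forms.\<close>
lemma young_ineq_exp:
  fixes \<theta> \<epsilon> E1 E2 :: real
  assumes "0 < \<theta>" "\<theta> < 1" "0 < \<epsilon>"
  shows "exp (\<theta> * E1 + (1-\<theta>) * E2) \<le> \<epsilon> * exp E1 + young_const \<theta> \<epsilon> * exp E2"
proof -
  have "exp (\<theta> * E1 + (1-\<theta>) * E2) = exp E1 powr \<theta> * exp E2 powr (1-\<theta>)"
    by (simp add: exp_powr_real mult_exp_exp algebra_simps)
  also have "\<dots> \<le> \<epsilon> * exp E1 + young_const \<theta> \<epsilon> * exp E2"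
    by (rule young_ineq_eps) (use assms in auto)
  finally show ?thesis .
qed

lemma mult_le_eps_power2:
  fixes a1 b1 \<epsilon> :: real
  assumes "\<epsilon> > 0"
  shows "a1 * b1 \<le> \<epsilon> * a1^2 + b1^2 / (4*\<epsilon>)"
proof -
  have "0 \<le> (2 * \<epsilon> * a1 - b1)^2 / (4*\<epsilon>)" using assms by simp
  also have "(2 * \<epsilon> * a1 - b1)^2 / (4*\<epsilon>) = \<epsilon> * a1^2 + b1^2 / (4*\<epsilon>) - a1 * b1"
    using assms by (simp add: field_simps power2_eq_square)
  finally show ?thesis by simp
qed

lemma young_cutoff_term_gt2:
  fixes G U e R p \<alpha> \<epsilon> :: real and k :: nat
  assumes p: "p > 2" and G: "G \<ge> 0" and U: "U > 0" and e: "e \<ge> 0" and R: "R > 0"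
    and k: "2*real k > p" "k \<ge> 2" and eps: "\<epsilon> > 0"
  shows "G powr (p-2) * U powr (-2*\<alpha>) * (e^(2*k-2) / R^2)
     \<le> \<epsilon> * (G powr (p-2) * G^2 * U powr (-2*\<alpha>-2) * e^(2*k))
       + young_const ((p-2)/p) \<epsilon> * (U powr (-(2*\<alpha>+2-p)) * e powr (2*real k - p) * R powr (-p))"
proof (cases "G = 0 \<or> e = 0")
  case True
  have z: "G powr (p-2) * U powr (-2*\<alpha>) * (e^(2*k-2) / R^2) = 0"
    using True p k by auto
  have "0 \<le> young_const ((p-2)/p) \<epsilon> * (U powr (-(2*\<alpha>+2-p)) * e powr (2*real k - p) * R powr (-p))"
    using p by (intro mult_nonneg_nonneg young_const_nonneg) auto
  moreover have "0 \<le> \<epsilon> * (G powr (p-2) * G^2 * U powr (-2*\<alpha>-2) * e^(2*k))"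
    using eps G e by auto
  ultimately show ?thesis using z by linarith
next
  case False
  then have G': "G > 0" and e': "e > 0" using G e by auto
  define \<theta> where "\<theta> = (p-2)/p"
  have th: "0 < \<theta>" "\<theta> < 1" using p unfolding \<theta>_def by auto
  define E2 where "E2 = p * ln G + (-2*\<alpha>-2) * ln U + 2 * real k * ln e"
  define E3 where "E3 = (-(2*\<alpha>+2-p)) * ln U + (2*real k - p) * ln e + (-p) * ln R"
  have T1: "G powr (p-2) * G^2 * U powr (-2*\<alpha>-2) * e^(2*k) = exp E2"
    using G' U e' unfolding E2_def
    by (simp add: powr_eq_exp_ln power_eq_exp_ln mult_exp_exp algebra_simps)
  have T2: "U powr (-(2*\<alpha>+2-p)) * e powr (2*real k - p) * R powr (-p) = exp E3"
    using G' U e' R unfolding E3_def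
    by (simp add: powr_eq_exp_ln power_eq_exp_ln mult_exp_exp algebra_simps)
  have ex: "(p-2) * ln G + (-2*\<alpha>) * ln U + (2*real k - 2) * ln e + (-2) * ln R = \<theta> * E2 + (1-\<theta>) * E3"
    unfolding \<theta>_def E2_def E3_def using p by (simp add: field_simps)
  have rk: "real (2*k-2) = 2*real k - 2" using k by simp
  have f1: "G powr (p-2) = exp ((p-2) * ln G)" using G' by (simp add: powr_eq_exp_ln)
  have f2: "U powr (-2*\<alpha>) = exp ((-2*\<alpha>) * ln U)" using U by (simp add: powr_eq_exp_ln)
  have f3: "e^(2*k-2) = exp ((2*real k - 2) * ln e)" using e' power_eq_exp_ln[OF e', of "2*k-2"] rk by simp
  have f4: "R^2 = exp (2 * ln R)" using power_eq_exp_ln[OF R, of 2] by simp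
  have "G powr (p-2) * U powr (-2*\<alpha>) * (e^(2*k-2) / R^2) = exp (\<theta> * E2 + (1-\<theta>) * E3)"
    unfolding f1 f2 f3 f4 ex[symmetric] by (simp add: mult_exp_exp exp_diff[symmetric] algebra_simps)
  also have "\<dots> \<le> \<epsilon> * exp E2 + young_const \<theta> \<epsilon> * exp E3"
    by (rule young_ineq_exp) (use th eps in auto)
  finally show ?thesis using T1 T2 unfolding \<theta>_def by simp
qed

lemma young_remainder_term_pos:
  fixes W U e R p a b \<epsilon> :: real and k :: nat
  assumes W: "W > 0" and U: "U > 0" and e: "e > 0" and R: "R > 0"
    and a: "a > 0" "b > a" and eps: "\<epsilon> > 0"
  defines "S \<equiv> b/(b-a)"
  shows "W * U powr (-a) * e powr (2*real k - p) * R powr (-p)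
     \<le> \<epsilon> * (U powr (-b) * e^(2*k))
       + young_const (a/b) \<epsilon> * (W powr S * e powr (S * (2*real k - p - 2*real k*a/b)) * R powr (-p*S))"
proof -
  define m where "m = S * (2*real k - p - 2*real k*a/b)"
  define \<theta> where "\<theta> = a/b"
  have th: "0 < \<theta>" "\<theta> < 1" using a unfolding \<theta>_def by auto
  define E2 where "E2 = (-b) * ln U + 2 * real k * ln e"
  define E3 where "E3 = S * ln W + m * ln e + (-p*S) * ln R"
  have T1: "U powr (-b) * e^(2*k) = exp E2"
    using U e unfolding E2_def by (simp add: powr_eq_exp_ln power_eq_exp_ln mult_exp_exp algebra_simps)
  have T2: "W powr S * e powr m * R powr (-p*S) = exp E3"
    using W e R unfolding E3_def by (simp add: powr_eq_exp_ln mult_exp_exp algebra_simps)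
  have ex: "ln W + (-a) * ln U + (2*real k - p) * ln e + (-p) * ln R = \<theta> * E2 + (1-\<theta>) * E3"
  proof -
    have h1: "(1-\<theta>) * S = 1" unfolding \<theta>_def S_def using a by (simp add: field_simps)
    have h2: "(1-\<theta>)*E3 = ((1-\<theta>)*S) * ln W + ((1-\<theta>)*S) * (2*real k - p - 2*real k*a/b) * ln e
        + (-p)*((1-\<theta>)*S) * ln R"
      unfolding E3_def m_def by (simp add: algebra_simps)
    have h3: "\<theta> * E2 = (-a) * ln U + (2*real k*a/b) * ln e"
      unfolding E2_def \<theta>_def using a by (simp add: field_simps)
    show ?thesis unfolding h3 h2 h1 by (simp add: algebra_simps)
  qed
  have "exp (ln W) * U powr (-a) * e powr (2*real k - p) * R powr (-p)
     = exp (ln W + (-a) * ln U + (2*real k - p) * ln e + (-p) * ln R)"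
    using U e R by (simp del: exp_ln add: powr_eq_exp_ln mult_exp_exp algebra_simps)
  then have "W * U powr (-a) * e powr (2*real k - p) * R powr (-p) = exp (\<theta> * E2 + (1-\<theta>) * E3)"
    unfolding ex using W by simp
  also have "\<dots> \<le> \<epsilon> * exp E2 + young_const \<theta> \<epsilon> * exp E3"
    by (rule young_ineq_exp) (use th eps in auto)
  finally show ?thesis using T1 T2 unfolding \<theta>_def m_def by simp
qed

lemma young_remainder_term:
  fixes W U e R p a b \<epsilon> :: real and k :: nat
  assumes W: "W > 0" and U: "U > 0" and e: "e \<ge> 0" "e \<le> 1" and R: "R > 0"
    and a: "a > 0" "b > a" and k: "2*real k > p"
    and m: "(b/(b-a)) * (2*real k - p - 2*real k*a/b) \<ge> 0" and eps: "\<epsilon> > 0"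
  shows "W * U powr (-a) * e powr (2*real k - p) * R powr (-p)
     \<le> \<epsilon> * (U powr (-b) * e^(2*k)) + young_const (a/b) \<epsilon> * (W powr (b/(b-a)) * R powr (-p*(b/(b-a))))"
proof (cases "e = 0")
  case True
  have "0 \<le> young_const (a/b) \<epsilon> * (W powr (b/(b-a)) * R powr (-p*(b/(b-a))))"
    using a by (intro mult_nonneg_nonneg young_const_nonneg) auto
  moreover have "0 \<le> \<epsilon> * (U powr (-b) * e^(2*k))" using eps e by auto
  ultimately show ?thesis using True by auto
next
  case False
  define S where "S = b/(b-a)"
  define m where "m = S * (2*real k - p - 2*real k*a/b)"
  have e': "e > 0" using e False by auto
  have "e powr m \<le> 1" using e' e m unfolding m_def S_def by (intro powr_le1) auto
  then have "W powr S * e powr m * R powr (-p*S) \<le> W powr S * R powr (-p*S)"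
    using mult_left_mono[of "e powr m" 1 "W powr S * R powr (-p*S)"] by (simp add: algebra_simps)
  then have "young_const (a/b) \<epsilon> * (W powr S * e powr m * R powr (-p*S))
      \<le> young_const (a/b) \<epsilon> * (W powr S * R powr (-p*S))"
    using a by (intro mult_left_mono young_const_nonneg) auto
  with young_remainder_term_pos[OF W U e' R a eps, of k p] show ?thesis
    unfolding S_def m_def by linarith
qed

definition cutoff_const :: "real \<Rightarrow> real \<Rightarrow> real" where
  "cutoff_const p \<epsilon> = (if p = 2 then 1 else young_const ((p-2)/p) \<epsilon>)"

lemma cutoff_const_nonneg: "p \<ge> 2 \<Longrightarrow> cutoff_const p \<epsilon> \<ge> 0"
  unfolding cutoff_const_def using young_const_nonneg[of "(p-2)/p" \<epsilon>] by auto

lemma young_cutoff_term: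
  fixes G U e R p \<alpha> \<epsilon> :: real and k :: nat
  assumes p: "p \<ge> 2" and G: "G \<ge> 0" and U: "U > 0" and e: "e \<ge> 0" and R: "R > 0"
    and k: "2*real k > p" "k \<ge> 2" and eps: "\<epsilon> > 0"
  shows "rpow G (p-2) * U powr (-2*\<alpha>) * (e^(2*k-2) / R^2)
     \<le> \<epsilon> * (rpow G (p-2) * G^2 * U powr (-2*\<alpha>-2) * e^(2*k))
       + cutoff_const p \<epsilon> * (U powr (-(2*\<alpha>+2-p)) * e powr (2*real k - p) * R powr (-p))"
proof (cases "p = 2")
  case False
  then show ?thesis unfolding rpow_def cutoff_const_def
    using young_cutoff_term_gt2[OF _ G U e R k eps, of \<alpha>] p by simp
next
  case True
  have "e^(2*k-2) / R^2 = e powr (2*real k - p) * R powr (-p)"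
  proof (cases "e = 0")
    case True
    then show ?thesis using k by (simp add: power_0_left)
  next
    case False
    then have "e^(2*k-2) = e powr (2*real k - p)"
      using e k \<open>p = 2\<close> by (simp add: powr_realpow[symmetric] of_nat_diff)
    moreover have "R powr (-p) = 1 / R^2"
      using R \<open>p = 2\<close> by (simp add: powr_minus powr_realpow divide_inverse)
    ultimately show ?thesis by (simp add: divide_inverse)
  qed
  moreover have "0 \<le> \<epsilon> * (G^2 * U powr (-2*\<alpha>-2) * e^(2*k))" using eps e by simp
  ultimately show ?thesis unfolding rpow_def cutoff_const_def using True by simp
qed

lemma power2_norm_scaleR_add:
  fixes v z :: "'a::real_inner"
  shows "(norm (a *\<^sub>R v + b *\<^sub>R z))^2 = a^2 * (norm v)^2 + 2*a*b*(v \<bullet> z) + b^2 * (norm z)^2"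
  unfolding power2_norm_eq_inner
  by (simp add: inner_add_left inner_add_right inner_commute algebra_simps power2_eq_square)

section \<open>The integrands of the test-function argument\<close>

locale positive_solution_setting =
  fixes u w g :: "'a::euclidean_space \<Rightarrow> real" and p \<delta> \<alpha> :: real and k :: nat
  assumes uC1: "C1_fun u" and upos: "\<forall>x. 0 < u x"
    and w_loc: "\<forall>K. compact K \<longrightarrow> set_integrable lebesgue K w"
    and g_loc: "\<forall>K. compact K \<longrightarrow> set_integrable lebesgue K g"
    and p2: "p \<ge> 2" and kk: "k \<ge> 2"
begin

text \<open>
  Writing \<open>A, X, D, B\<close> for the integrals of \<open>grad_term, mixed_term, cutoff_term,
  source_term\<close>, the weak formulation tested with \<open>u^-(2\<alpha>+1) \<psi>\<^sub>R\<^sup>2\<close> reads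
  \<open>2X - (2\<alpha>+1)A = -2B\<close>, and stability tested with \<open>u^-\<alpha> \<psi>\<^sub>R\<close> gives
  \<open>(p-1)(D - 2\<alpha>X + \<alpha>\<^sup>2A) \<ge> 2\<delta>B\<close>. Young's inequality bounds \<open>cutoff_term\<close> by
  \<open>grad_term\<close> and \<open>remainder_term\<close>, and \<open>remainder_term\<close> by \<open>source_term\<close> and \<open>w^S\<close>.
\<close>

definition "grad_norm x = norm (grad u x)"
definition "grad_weight x = rpow (grad_norm x) (p-2)"
definition "grad_term R x =
  w x * grad_weight x * (grad_norm x)^2 * u x powr (-2*\<alpha>-2) * cutoff_pow k R x ^ 2"
definition "mixed_term R x =
  w x * grad_weight x * u x powr (-2*\<alpha>-1) * cutoff_pow k R x * (grad u x \<bullet> grad_cutoff_pow k R x)"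
definition "cutoff_term R x =
  w x * grad_weight x * u x powr (-2*\<alpha>) * (norm (grad_cutoff_pow k R x))^2"
definition "mixed_bound R x =
  w x * grad_weight x * grad_norm x * u x powr (-2*\<alpha>-1) * cutoff_pow k R x * norm (grad_cutoff_pow k R x)"
definition "source_term R x =
  g x * u x powr (-(\<delta>+2*\<alpha>+1)) * cutoff_pow k R x ^ 2"
definition "remainder_term R x =
  w x * u x powr (-(2*\<alpha>+2-p)) * cutoff R x powr (2*real k - p) * R powr (-p)"

lemma continuous_on_u: "continuous_on UNIV u" using C1_fun_continuous_on[OF uC1] .
lemma continuous_on_grad_u: "continuous_on UNIV (grad u)" using C1_fun_grad_continuous_on[OF uC1] .
lemma u_nonzero: "\<forall>x\<in>UNIV. u x \<noteq> 0" using upos by (simp add: less_imp_neq[symmetric])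

lemma continuous_on_grad_norm: "continuous_on UNIV grad_norm"
  unfolding grad_norm_def by (intro continuous_on_norm continuous_on_grad_u)

lemma continuous_on_grad_weight: "continuous_on UNIV grad_weight"
proof (cases "p = 2")
  case True then show ?thesis unfolding grad_weight_def rpow_def by simp
next
  case False
  then have "grad_weight = (\<lambda>x. grad_norm x powr (p-2))" unfolding grad_weight_def rpow_def by auto
  moreover have "continuous_on UNIV (\<lambda>x. grad_norm x powr (p-2))"
    by (rule continuous_on_powr'[OF continuous_on_grad_norm continuous_on_const]) (use False p2 in \<open>auto simp: grad_norm_def\<close>)
  ultimately show ?thesis by simp
qed

lemma continuous_on_u_powr: "continuous_on UNIV (\<lambda>x. u x powr s)"
  by (rule continuous_on_powr[OF continuous_on_u continuous_on_const u_nonzero])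

lemma vanish_outside_ball: assumes "R > 0" "norm x > 2*R"
  shows "cutoff R x = 0" "cutoff_pow k R x = 0" "grad_cutoff_pow k R x = 0"
proof -
  show e: "cutoff R x = 0" by (rule cutoff_eq_0[OF assms(1)]) (use assms in simp)
  show "cutoff_pow k R x = 0" unfolding cutoff_pow_def e using kk by simp
  have "(0::real) ^ (k - Suc 0) = 0" using kk by (simp add: power_0_left)
  then show "grad_cutoff_pow k R x = 0" unfolding grad_cutoff_pow_def e by simp
qed

lemma integrable_w_mult:
  assumes "R > 0" "continuous_on UNIV h" "\<And>x. norm x > 2*R \<Longrightarrow> h x = 0"
  shows "integrable lebesgue (\<lambda>x. w x * h x)"
  by (rule integrable_mult_compact_support[OF w_loc assms(2,3)])

lemma integrable_grad_term: "R > 0 \<Longrightarrow> integrable lebesgue (grad_term R)"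
proof -
  assume R: "R > 0"
  have "integrable lebesgue (\<lambda>x. w x * (grad_weight x * (grad_norm x)^2 * u x powr (-2*\<alpha>-2) * cutoff_pow k R x ^ 2))"
    by (rule integrable_w_mult[OF R])
      (auto intro!: continuous_intros continuous_on_grad_weight continuous_on_grad_norm
        continuous_on_u_powr continuous_on_cutoff_pow R simp: vanish_outside_ball[OF R])
  then show ?thesis unfolding grad_term_def by (simp add: mult.assoc)
qed

lemma integrable_mixed_term: "R > 0 \<Longrightarrow> integrable lebesgue (mixed_term R)"
proof -
  assume R: "R > 0"
  have "integrable lebesgue (\<lambda>x. w x * (grad_weight x * u x powr (-2*\<alpha>-1) * cutoff_pow k R x * (grad u x \<bullet> grad_cutoff_pow k R x)))"
    by (rule integrable_w_mult[OF R])
      (auto intro!: continuous_intros continuous_on_grad_weight continuous_on_u_powr continuous_on_cutoff_pow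
        continuous_on_grad_u continuous_on_grad_cutoff_pow R simp: vanish_outside_ball[OF R])
  then show ?thesis unfolding mixed_term_def by (simp add: mult.assoc)
qed

lemma integrable_cutoff_term: "R > 0 \<Longrightarrow> integrable lebesgue (cutoff_term R)"
proof -
  assume R: "R > 0"
  have "integrable lebesgue (\<lambda>x. w x * (grad_weight x * u x powr (-2*\<alpha>) * (norm (grad_cutoff_pow k R x))^2))"
    by (rule integrable_w_mult[OF R])
      (auto intro!: continuous_intros continuous_on_grad_weight continuous_on_u_powr
        continuous_on_grad_cutoff_pow R simp: vanish_outside_ball[OF R])
  then show ?thesis unfolding cutoff_term_def by (simp add: mult.assoc)
qed

lemma integrable_mixed_bound: "R > 0 \<Longrightarrow> integrable lebesgue (mixed_bound R)"
proof -
  assume R: "R > 0"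
  have "integrable lebesgue (\<lambda>x. w x * (grad_weight x * grad_norm x * u x powr (-2*\<alpha>-1) * cutoff_pow k R x * norm (grad_cutoff_pow k R x)))"
    by (rule integrable_w_mult[OF R])
      (auto intro!: continuous_intros continuous_on_grad_weight continuous_on_grad_norm continuous_on_u_powr
        continuous_on_cutoff_pow continuous_on_grad_cutoff_pow R simp: vanish_outside_ball[OF R])
  then show ?thesis unfolding mixed_bound_def by (simp add: mult.assoc)
qed

lemma integrable_remainder_term:
  assumes R: "R > 0" and kp: "2*real k > p"
  shows "integrable lebesgue (remainder_term R)"
proof -
  have ce: "continuous_on UNIV (\<lambda>x. cutoff R x powr (2*real k - p))"
    by (rule continuous_on_powr'[OF continuous_on_cutoff[OF R] continuous_on_const]) (use kp cutoff_range in auto)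
  have "integrable lebesgue (\<lambda>x. w x * (u x powr (-(2*\<alpha>+2-p)) * cutoff R x powr (2*real k - p) * R powr (-p)))"
    by (rule integrable_w_mult[OF R])
      (auto intro!: continuous_intros ce continuous_on_u_powr simp: vanish_outside_ball[OF R])
  then show ?thesis unfolding remainder_term_def by (simp add: mult.assoc)
qed

lemma integrable_source_term: "R > 0 \<Longrightarrow> integrable lebesgue (source_term R)"
proof -
  assume R: "R > 0"
  have "integrable lebesgue (\<lambda>x. g x * (u x powr (-(\<delta>+2*\<alpha>+1)) * cutoff_pow k R x ^ 2))"
    by (rule integrable_mult_compact_support[OF g_loc, where r="2*R"])
      (auto intro!: continuous_intros continuous_on_u_powr continuous_on_cutoff_pow R
        simp: vanish_outside_ball[OF R])
  then show ?thesis unfolding source_term_def by (simp add: mult.assoc)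
qed

lemma weak_integrand_eq:
  "w x * rpow (grad_norm x) (p-2) * (grad u x \<bullet> test_grad u (-(2*\<alpha>+1)) 2 k R x)
    = 2 * mixed_term R x - (2*\<alpha>+1) * grad_term R x"
proof -
  have e: "-(2*\<alpha>+1) - 1 = -2*\<alpha>-2" "-(2*\<alpha>+1) = -2*\<alpha>-1" by simp_all
  have gg: "grad u x \<bullet> grad u x = (grad_norm x)^2" unfolding grad_norm_def by (simp add: power2_norm_eq_inner)
  show ?thesis
    unfolding test_grad_def mixed_term_def grad_term_def grad_weight_def[symmetric] e inner_add_right inner_scaleR_right gg
    by (simp add: algebra_simps power2_eq_square)
qed

lemma weak_source_integrand_eq:
  "g x * fsing \<delta> \<delta> (u x) * (u x powr (-(2*\<alpha>+1)) * cutoff_pow k R x ^ 2) = -2 * source_term R x"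
proof -
  have "u x powr (-\<delta>) * u x powr (-(2*\<alpha>+1)) = u x powr (-(\<delta>+2*\<alpha>+1))"
    using upos by (simp add: powr_add[symmetric] algebra_simps)
  then show ?thesis unfolding fsing_def source_term_def by (simp add: algebra_simps)
qed

lemma stability_grad_integrand_eq:
  "w x * rpow (grad_norm x) (p-2) * (norm (test_grad u (-\<alpha>) 1 k R x))^2
    = cutoff_term R x - 2*\<alpha> * mixed_term R x + \<alpha>^2 * grad_term R x"
proof -
  have tg: "test_grad u (-\<alpha>) 1 k R x = (u x powr (-\<alpha>)) *\<^sub>R grad_cutoff_pow k R x + (cutoff_pow k R x * (-\<alpha> * u x powr (-\<alpha>-1))) *\<^sub>R grad u x"
    unfolding test_grad_def by simp
  have n0: "(norm (test_grad u (-\<alpha>) 1 k R x))^2 = (u x powr (-\<alpha>))^2 * (norm (grad_cutoff_pow k R x))^2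
      + 2 * (u x powr (-\<alpha>)) * (cutoff_pow k R x * (-\<alpha> * u x powr (-\<alpha>-1))) * (grad_cutoff_pow k R x \<bullet> grad u x)
      + (cutoff_pow k R x * (-\<alpha> * u x powr (-\<alpha>-1)))^2 * (grad_norm x)^2"
    unfolding tg grad_norm_def by (rule power2_norm_scaleR_add)
  have s1: "(u x powr (-\<alpha>))^2 = u x powr (-2*\<alpha>)"
    using upos by (simp add: power2_eq_square powr_add[symmetric])
  have s2: "(u x powr (-\<alpha>-1))^2 = u x powr (-2*\<alpha>-2)"
    using upos by (simp add: power2_eq_square powr_add[symmetric])
  have s3: "u x powr (-\<alpha>) * u x powr (-\<alpha>-1) = u x powr (-2*\<alpha>-1)"
    using upos by (simp add: powr_add[symmetric])
  have t2: "2 * (u x powr (-\<alpha>)) * (cutoff_pow k R x * (-\<alpha> * u x powr (-\<alpha>-1))) * (grad_cutoff_pow k R x \<bullet> grad u x)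
     = -2*\<alpha> * (cutoff_pow k R x * (u x powr (-\<alpha>) * u x powr (-\<alpha>-1)) * (grad u x \<bullet> grad_cutoff_pow k R x))"
    by (simp add: algebra_simps inner_commute)
  have t3: "(cutoff_pow k R x * (-\<alpha> * u x powr (-\<alpha>-1)))^2 = \<alpha>^2 * (cutoff_pow k R x)^2 * (u x powr (-\<alpha>-1))^2"
    by (simp add: power_mult_distrib)
  have N: "(norm (test_grad u (-\<alpha>) 1 k R x))^2 = u x powr (-2*\<alpha>) * (norm (grad_cutoff_pow k R x))^2
     - 2*\<alpha> * (cutoff_pow k R x * u x powr (-2*\<alpha>-1) * (grad u x \<bullet> grad_cutoff_pow k R x))
     + \<alpha>^2 * (cutoff_pow k R x)^2 * u x powr (-2*\<alpha>-2) * (grad_norm x)^2"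
    unfolding n0 t2 t3 s1 s2 s3 by simp
  show ?thesis unfolding cutoff_term_def mixed_term_def grad_term_def grad_weight_def[symmetric] N
    by (simp add: algebra_simps)
qed

lemma stability_source_integrand_eq:
  "g x * fsing' \<delta> \<delta> (u x) * (u x powr (-\<alpha>) * cutoff_pow k R x ^ 1)^2 = 2*\<delta> * source_term R x"
proof -
  have "(u x powr (-\<alpha>))^2 = u x powr (-2*\<alpha>)"
    using upos by (simp add: power2_eq_square powr_add[symmetric])
  moreover have "u x powr (-\<delta>-1) * u x powr (-2*\<alpha>) = u x powr (-(\<delta>+2*\<alpha>+1))"
    using powr_add[of "u x" "-\<delta>-1" "-2*\<alpha>"] by (smt (verit))
  ultimately show ?thesis unfolding fsing'_def source_term_def
    by (simp add: algebra_simps power2_eq_square power_mult_distrib)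
qed

lemma stability_middle_integrand_le:
  assumes "w x \<ge> 0"
  shows "(if grad u x = 0 then 0 else w x * norm (grad u x) powr (p - 4) * (grad u x \<bullet> v)^2)
     \<le> w x * rpow (grad_norm x) (p-2) * (norm v)^2"
proof (cases "grad u x = 0")
  case True
  then show ?thesis using assms unfolding rpow_def by auto
next
  case False
  then have G: "grad_norm x > 0" unfolding grad_norm_def by auto
  have cs: "(grad u x \<bullet> v)^2 \<le> (grad_norm x)^2 * (norm v)^2"
  proof -
    have "\<bar>grad u x \<bullet> v\<bar> \<le> grad_norm x * norm v" unfolding grad_norm_def by (rule Cauchy_Schwarz_ineq2)
    then have "\<bar>grad u x \<bullet> v\<bar>^2 \<le> (grad_norm x * norm v)^2" by (intro power_mono) auto
    then show ?thesis by (simp add: power_mult_distrib)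
  qed
  have q: "grad_norm x powr (p-4) * (grad_norm x)^2 = grad_norm x powr (p-2)"
  proof -
    have "(grad_norm x)^2 = grad_norm x powr 2" using G by (simp add: powr_realpow)
    then have "grad_norm x powr (p-4) * (grad_norm x)^2 = grad_norm x powr ((p-4) + 2)"
      using powr_add[of "grad_norm x" "p-4" 2] by simp
    then show ?thesis by simp
  qed
  have r: "rpow (grad_norm x) (p-2) = grad_norm x powr (p-4) * (grad_norm x)^2"
    using G q unfolding rpow_def by auto
  have "w x * grad_norm x powr (p - 4) * (grad u x \<bullet> v)^2 \<le> w x * grad_norm x powr (p - 4) * ((grad_norm x)^2 * (norm v)^2)"
    using assms cs by (intro mult_left_mono) auto
  then show ?thesis using False unfolding r by (simp add: grad_norm_def algebra_simps)
qed

lemma grad_weight_nonneg: "grad_weight x \<ge> 0" unfolding grad_weight_def rpow_def by simp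
lemma grad_norm_nonneg: "grad_norm x \<ge> 0" unfolding grad_norm_def by simp
lemma cutoff_pow_nonneg: "cutoff_pow k R x \<ge> 0" unfolding cutoff_pow_def using cutoff_range(1)[of R x] by simp
lemma power2_cutoff_pow: "(cutoff_pow k R x)^2 = cutoff R x ^ (2*k)" unfolding cutoff_pow_def by (simp add: power_mult[symmetric] mult.commute)

lemma abs_mixed_term_le:
  assumes "w x \<ge> 0"
  shows "\<bar>mixed_term R x\<bar> \<le> mixed_bound R x"
proof -
  have "\<bar>grad u x \<bullet> grad_cutoff_pow k R x\<bar> \<le> grad_norm x * norm (grad_cutoff_pow k R x)" unfolding grad_norm_def by (rule Cauchy_Schwarz_ineq2)
  then have "(w x * grad_weight x * u x powr (-2*\<alpha>-1) * cutoff_pow k R x) * \<bar>grad u x \<bullet> grad_cutoff_pow k R x\<bar>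
     \<le> (w x * grad_weight x * u x powr (-2*\<alpha>-1) * cutoff_pow k R x) * (grad_norm x * norm (grad_cutoff_pow k R x))"
    using assms grad_weight_nonneg[of x] cutoff_pow_nonneg[of R x] by (intro mult_left_mono mult_nonneg_nonneg) auto
  then show ?thesis unfolding mixed_term_def mixed_bound_def using assms grad_weight_nonneg[of x] cutoff_pow_nonneg[of R x]
    by (simp add: abs_mult algebra_simps abs_of_nonneg)
qed

lemma mixed_bound_le:
  assumes "w x \<ge> 0" "\<epsilon> > 0"
  shows "mixed_bound R x \<le> \<epsilon> * grad_term R x + cutoff_term R x / (4*\<epsilon>)"
proof -
  define s1 where "s1 = grad_norm x * u x powr (-\<alpha>-1) * cutoff_pow k R x"
  define t1 where "t1 = u x powr (-\<alpha>) * norm (grad_cutoff_pow k R x)"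
  have s3: "u x powr (-\<alpha>) * u x powr (-\<alpha>-1) = u x powr (-2*\<alpha>-1)"
    using upos by (simp add: powr_add[symmetric])
  have q1: "(u x powr (-\<alpha>))^2 = u x powr (-2*\<alpha>)"
    using upos by (simp add: power2_eq_square powr_add[symmetric])
  have q2: "(u x powr (-\<alpha>-1))^2 = u x powr (-2*\<alpha>-2)"
    using upos by (simp add: power2_eq_square powr_add[symmetric])
  have Y: "mixed_bound R x = (w x * grad_weight x) * (s1 * t1)"
    unfolding mixed_bound_def s1_def t1_def s3[symmetric] by (simp add: algebra_simps)
  have A: "grad_term R x = (w x * grad_weight x) * s1^2"
    unfolding grad_term_def s1_def by (simp add: power_mult_distrib q2 algebra_simps)
  have D: "cutoff_term R x = (w x * grad_weight x) * t1^2"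
    unfolding cutoff_term_def t1_def by (simp add: power_mult_distrib q1 algebra_simps)
  have "(w x * grad_weight x) * (s1 * t1) \<le> (w x * grad_weight x) * (\<epsilon> * s1^2 + t1^2 / (4*\<epsilon>))"
    using mult_le_eps_power2[OF assms(2)] assms grad_weight_nonneg by (intro mult_left_mono) auto
  then show ?thesis unfolding Y A D by (simp add: algebra_simps)
qed

lemma grad_term_nonneg: "w x \<ge> 0 \<Longrightarrow> grad_term R x \<ge> 0"
  unfolding grad_term_def using grad_weight_nonneg by simp

lemma power2_norm_grad_cutoff_pow_le:
  assumes R: "R > 0"
  shows "(norm (grad_cutoff_pow k R x))^2 \<le> (real k)^2 * (cutoff R x ^ (2*k-2) / R^2)"
proof -
  have "2*k-2 = (k-1)*2" using kk by simp
  then have pow: "(cutoff R x ^ (k-1))^2 = cutoff R x ^ (2*k-2)" by (simp only: power_mult)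
  have "(norm (grad_cutoff_pow k R x))^2 \<le> (real k * cutoff R x ^ (k-1) / R)^2"
    using norm_grad_cutoff_pow_le[OF kk R, of x] by (intro power_mono) auto
  also have "\<dots> = (real k)^2 * (cutoff R x ^ (2*k-2) / R^2)"
    using pow by (simp add: power_mult_distrib power_divide)
  finally show ?thesis .
qed

lemma cutoff_term_le:
  assumes w: "w x \<ge> 0" and R: "R > 0" and eps: "\<epsilon> > 0" and kp: "2*real k > p"
  shows "cutoff_term R x \<le> (real k)^2 * (\<epsilon> * grad_term R x + cutoff_const p \<epsilon> * remainder_term R x)"
proof -
  have "cutoff_term R x
      \<le> w x * grad_weight x * u x powr (-2*\<alpha>) * ((real k)^2 * (cutoff R x ^ (2*k-2) / R^2))"
    unfolding cutoff_term_def using power2_norm_grad_cutoff_pow_le[OF R] w grad_weight_nonneg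
    by (intro mult_left_mono) auto
  also have "\<dots> = (real k)^2 * w x * (grad_weight x * u x powr (-2*\<alpha>) * (cutoff R x ^ (2*k-2) / R^2))"
    by (simp add: algebra_simps)
  also have "\<dots> \<le> (real k)^2 * w x * (\<epsilon> * (grad_weight x * (grad_norm x)^2 * u x powr (-2*\<alpha>-2) * cutoff R x^(2*k))
      + cutoff_const p \<epsilon> * (u x powr (-(2*\<alpha>+2-p)) * cutoff R x powr (2*real k - p) * R powr (-p)))"
    unfolding grad_weight_def
    using young_cutoff_term[OF p2 grad_norm_nonneg upos[rule_format] cutoff_range(1) R kp kk eps] w
    by (intro mult_left_mono) auto
  also have "\<dots> = (real k)^2 * (\<epsilon> * grad_term R x + cutoff_const p \<epsilon> * remainder_term R x)"
    unfolding grad_term_def remainder_term_def power2_cutoff_pow by (simp add: algebra_simps)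
  finally show ?thesis .
qed

definition "a_exp = 2*\<alpha>+2-p"
definition "b_exp = \<delta>+2*\<alpha>+1"
definition "S_exp = b_exp/(b_exp-a_exp)"

lemma remainder_term_le:
  assumes w: "w x > 0" and gx: "g x > 0" "1 / g x \<le> M" and R: "R > 0"
    and a: "a_exp > 0" "b_exp > a_exp" and kp: "2*real k > p"
    and m: "S_exp * (2*real k - p - 2*real k*a_exp/b_exp) \<ge> 0" and eps: "\<epsilon> > 0"
  shows "remainder_term R x \<le> \<epsilon> * M * source_term R x
    + young_const (a_exp/b_exp) \<epsilon> * (indicator (ball 0 (2*R)) x * w x powr S_exp) * R powr (-p*S_exp)"
proof (cases "x \<in> ball 0 (2*R)")
  case True
  have y: "remainder_term R x \<le> \<epsilon> * (u x powr (-b_exp) * cutoff R x^(2*k))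
      + young_const (a_exp/b_exp) \<epsilon> * (w x powr S_exp * R powr (-p*S_exp))"
    unfolding remainder_term_def a_exp_def[symmetric] S_exp_def
    by (rule young_remainder_term[OF w upos[rule_format] cutoff_range R a kp m[unfolded S_exp_def] eps])
  have "u x powr (-b_exp) * cutoff R x^(2*k) \<le> M * source_term R x"
  proof -
    have "1 \<le> M * g x" using gx by (simp add: divide_le_eq mult.commute)
    then have "1 * (u x powr (-b_exp) * cutoff R x^(2*k)) \<le> (M * g x) * (u x powr (-b_exp) * cutoff R x^(2*k))"
      using cutoff_range(1)[of R x] by (intro mult_right_mono) auto
    then show ?thesis unfolding source_term_def power2_cutoff_pow b_exp_def by (simp add: algebra_simps)
  qed
  then have "\<epsilon> * (u x powr (-b_exp) * cutoff R x^(2*k)) \<le> \<epsilon> * (M * source_term R x)" using eps by simp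
  then show ?thesis using y True by (simp add: algebra_simps)
next
  case False
  then have "cutoff R x = 0" using cutoff_eq_0[OF R, of x] by (simp add: not_less)
  then have "remainder_term R x = 0" unfolding remainder_term_def using kp by simp
  moreover have "0 \<le> \<epsilon> * M * source_term R x"
  proof -
    have "M > 0" using gx by (metis divide_pos_pos less_le_trans zero_less_one)
    then show ?thesis unfolding source_term_def using eps gx by simp
  qed
  moreover have "0 \<le> young_const (a_exp/b_exp) \<epsilon> * (indicator (ball 0 (2*R)) x * w x powr S_exp) * R powr (-p*S_exp)"
    using a by (intro mult_nonneg_nonneg young_const_nonneg) auto
  ultimately show ?thesis by linarith
qed

end

section \<open>Absorption of the error terms\<close>

lemma absorb_le:
  fixes X Y Z K :: real and C :: "real \<Rightarrow> real"
  assumes X: "0 \<le> X" and K: "0 \<le> K" and XY: "X \<le> K * Y"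
    and Y: "\<And>\<epsilon>. \<epsilon> > 0 \<Longrightarrow> Y \<le> \<epsilon> * X + C \<epsilon> * Z"
  shows "X \<le> 2 * K * C (1 / (2*K + 1)) * Z"
proof -
  define \<epsilon> where "\<epsilon> = 1 / (2*K + 1)"
  have "K * \<epsilon> \<le> 1/2" unfolding \<epsilon>_def using K by (simp add: field_simps)
  then have half: "K * \<epsilon> * X \<le> X / 2" using X by (metis mult_right_mono times_divide_eq_left mult_1)
  have "\<epsilon> > 0" unfolding \<epsilon>_def using K by simp
  then have "X \<le> K * (\<epsilon> * X + C \<epsilon> * Z)"
    using XY mult_left_mono[OF Y K] by (meson order_trans)
  also have "\<dots> = K * \<epsilon> * X + K * C \<epsilon> * Z" by (simp add: algebra_simps)
  finally show ?thesis using half unfolding \<epsilon>_def by linarith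
qed

text \<open>
  The weak identity and the stability inequality eliminate the source integral \<open>B\<close>,
  leaving \<open>(\<delta>(2\<alpha>+1) - (p-1)\<alpha>\<^sup>2) A \<le> (2\<delta> - 2(p-1)\<alpha>) X + (p-1) D\<close>; the mixed
  integral \<open>X\<close> is then absorbed into \<open>A\<close>.
\<close>
lemma grad_and_source_le_cutoff:
  fixes \<delta> p \<alpha> :: real
  assumes c: "\<delta>*(2*\<alpha>+1) - (p-1)*\<alpha>^2 > 0" and p: "p \<ge> 1" and \<alpha>: "\<alpha> \<ge> 0"
  obtains KA KB :: real where "KA \<ge> 0" "KB \<ge> 0"
    "\<And>A B X Y D. 2*X - (2*\<alpha>+1)*A = -2*B \<Longrightarrow> (p-1)*(D - 2*\<alpha>*X + \<alpha>^2*A) \<ge> 2*\<delta>*B \<Longrightarrow>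
       \<bar>X\<bar> \<le> Y \<Longrightarrow> (\<And>\<epsilon>. \<epsilon> > 0 \<Longrightarrow> Y \<le> \<epsilon>*A + D/(4*\<epsilon>)) \<Longrightarrow> 0 \<le> A \<Longrightarrow>
       A \<le> KA*D \<and> B \<le> KB*D"
proof -
  define c where "c = \<delta>*(2*\<alpha>+1) - (p-1)*\<alpha>^2"
  define d where "d = 2*\<delta> - 2*(p-1)*\<alpha>"
  define e where "e = c/(2*(\<bar>d\<bar>+1))"
  define KA where "KA = 2*(\<bar>d\<bar>/(4*e) + (p-1))/c"
  define KB where "KB = (2*\<alpha>+3)/2*KA + 1/4"
  have cp: "c > 0" and ep: "e > 0" using c unfolding c_def e_def by auto
  have KA: "KA \<ge> 0" unfolding KA_def using cp ep p by simp
  have KB: "KB \<ge> 0" unfolding KB_def using KA \<alpha> by simp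
  have "A \<le> KA*D \<and> B \<le> KB*D"
    if E: "2*X - (2*\<alpha>+1)*A = -2*B" and S: "(p-1)*(D - 2*\<alpha>*X + \<alpha>^2*A) \<ge> 2*\<delta>*B"
      and XY: "\<bar>X\<bar> \<le> Y" and Y: "\<And>\<epsilon>. \<epsilon> > 0 \<Longrightarrow> Y \<le> \<epsilon>*A + D/(4*\<epsilon>)" and A: "0 \<le> A"
    for A B X Y D
  proof -
    have "2*B = (2*\<alpha>+1)*A - 2*X" using E by linarith
    then have "\<delta>*(2*B) = \<delta>*((2*\<alpha>+1)*A - 2*X)" by (rule arg_cong)
    with S have "c*A \<le> d*X + (p-1)*D" unfolding c_def d_def by (simp add: algebra_simps power2_eq_square)
    also have "d*X \<le> \<bar>d\<bar>*\<bar>X\<bar>" by (metis abs_ge_self abs_mult)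
    also have "\<dots> \<le> \<bar>d\<bar>*Y" using XY by (simp add: mult_left_mono)
    also have "\<bar>d\<bar>*Y \<le> \<bar>d\<bar>*(e*A + D/(4*e))" using Y[OF ep] by (simp add: mult_left_mono)
    also have "\<bar>d\<bar>*e*A \<le> (c/2)*A"
      using A cp unfolding e_def by (intro mult_right_mono) (auto simp: field_simps)
    then have "\<bar>d\<bar>*(e*A + D/(4*e)) + (p-1)*D \<le> (c/2)*A + (\<bar>d\<bar>/(4*e) + (p-1))*D"
      by (simp add: algebra_simps)
    finally have "(c/2)*A \<le> (\<bar>d\<bar>/(4*e) + (p-1))*D" by simp
    then have AD: "A \<le> KA*D" unfolding KA_def using cp by (simp add: field_simps)
    have "B \<le> (2*\<alpha>+1)/2*A + Y" using E XY by (simp add: field_simps)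
    also have "\<dots> \<le> (2*\<alpha>+1)/2*A + (A + D/4)" using Y[of 1] by simp
    also have "\<dots> = (2*\<alpha>+3)/2*A + D/4" by (simp add: field_simps)
    also have "\<dots> \<le> (2*\<alpha>+3)/2*(KA*D) + D/4" using AD \<alpha> by (intro add_right_mono mult_left_mono) auto
    finally have "B \<le> KB*D" unfolding KB_def by (simp add: algebra_simps)
    with AD show ?thesis by simp
  qed
  with KA KB show thesis by (rule that)
qed

section \<open>Decay of the weighted integral\<close>

lemma powr_le_split:
  fixes v \<tau> S S0 :: real
  assumes v: "v \<ge> 0" and t: "\<tau> > 0" and S: "0 < S" "S \<le> S0"
  shows "v powr S \<le> \<tau> powr (S - S0) * v powr S0 + \<tau> powr S"
proof (cases "v \<ge> \<tau>")
  case True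
  then have vp: "v > 0" using t by auto
  have "v powr (S - S0) \<le> \<tau> powr (S - S0)" using True t S by (intro powr_mono2') auto
  then have "v powr (S - S0) * v powr S0 \<le> \<tau> powr (S - S0) * v powr S0" by (intro mult_right_mono) auto
  moreover have "v powr S = v powr (S - S0) * v powr S0" using vp by (simp add: powr_add[symmetric])
  ultimately show ?thesis by (smt (verit) powr_ge_zero)
next
  case False
  then have "v powr S \<le> \<tau> powr S" using v S by (intro powr_mono2) auto
  moreover have "0 \<le> \<tau> powr (S - S0) * v powr S0" by simp
  ultimately show ?thesis by linarith
qed

lemma nn_integral_le_imp_integrable:
  fixes f :: "'a \<Rightarrow> real"
  assumes f: "f \<in> borel_measurable M" "AE x in M. 0 \<le> f x"
    and le: "(\<integral>\<^sup>+x. ennreal (f x) \<partial>M) \<le> ennreal c" and c: "0 \<le> c"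
  shows "integrable M f" "integral\<^sup>L M f \<le> c"
proof -
  have "(\<integral>\<^sup>+x. ennreal (f x) \<partial>M) < \<infinity>" using le_less_trans[OF le ennreal_less_top] by simp
  then show "integrable M f" by (intro integrableI_nonneg[OF f]) simp
  have "integral\<^sup>L M f = enn2real (\<integral>\<^sup>+x. ennreal (f x) \<partial>M)" by (rule integral_eq_nn_integral[OF f])
  also have "\<dots> \<le> enn2real (ennreal c)" by (rule enn2real_mono[OF le]) simp
  finally show "integral\<^sup>L M f \<le> c" using c by simp
qed

lemma integral_indicator_ball:
  assumes "r \<ge> 0"
  shows "(\<integral>x. indicator (ball (0::'a::euclidean_space) r) x \<partial>lebesgue)
    = r^DIM('a) * measure lebesgue (ball (0::'a) 1)"
proof -
  have "(\<integral>x. indicator (ball (0::'a) r) x \<partial>lebesgue) = Henstock_Kurzweil_Integration.content (ball (0::'a) r)"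
    by simp
  also have "\<dots> = r^DIM('a) * Henstock_Kurzweil_Integration.content (ball (0::'a) 1)"
    using assms by (rule content_ball_conv_unit_ball)
  finally show ?thesis by simp
qed

lemma ball_integral_powr_le:
  fixes w :: "'a::euclidean_space \<Rightarrow> real"
  assumes wm: "w \<in> borel_measurable lebesgue" and w0: "AE x in lebesgue. 0 \<le> w x"
    and iS0: "integrable lebesgue (\<lambda>x. indicator (ball 0 r) x * w x powr S0)"
    and r: "r \<ge> 0" and t: "\<tau> > 0" and S: "0 < S" "S \<le> S0"
  shows "integrable lebesgue (\<lambda>x. indicator (ball 0 r) x * w x powr S)"
    "(\<integral>x. indicator (ball 0 r) x * w x powr S \<partial>lebesgue)
       \<le> \<tau> powr (S - S0) * (\<integral>x. indicator (ball 0 r) x * w x powr S0 \<partial>lebesgue)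
         + \<tau> powr S * (r^DIM('a) * measure lebesgue (ball (0::'a) 1))"
proof -
  note wm[measurable]
  have [measurable]: "ball (0::'a) r \<in> sets lebesgue" by simp
  have iball: "integrable lebesgue (indicator (ball (0::'a) r) :: 'a \<Rightarrow> real)"
    using emeasure_lborel_ball_finite[of "0::'a" r] by (intro integrable_real_indicator) auto
  let ?g = "\<lambda>x. \<tau> powr (S - S0) * (indicator (ball (0::'a) r) x * w x powr S0) + \<tau> powr S * indicator (ball (0::'a) r) x"
  have ig: "integrable lebesgue ?g" using iS0 iball by auto
  have le: "AE x in lebesgue. indicator (ball 0 r) x * w x powr S \<le> ?g x"
    using w0 by eventually_elim (use powr_le_split[OF _ t S] in \<open>auto simp: indicator_def\<close>)
  show int: "integrable lebesgue (\<lambda>x. indicator (ball 0 r) x * w x powr S)"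
  proof (rule Bochner_Integration.integrable_bound[OF ig])
    show "AE x in lebesgue. norm (indicator (ball (0::'a) r) x * w x powr S) \<le> norm (?g x)"
      using le by eventually_elim (auto simp: indicator_def)
    show "(\<lambda>x. indicator (ball (0::'a) r) x * w x powr S) \<in> borel_measurable lebesgue" by measurable
  qed
  have "(\<integral>x. indicator (ball 0 r) x * w x powr S \<partial>lebesgue) \<le> integral\<^sup>L lebesgue ?g"
    by (rule integral_mono_AE[OF int ig le])
  also have "\<dots> = \<tau> powr (S - S0) * (\<integral>x. indicator (ball (0::'a) r) x * w x powr S0 \<partial>lebesgue)
      + \<tau> powr S * (\<integral>x. indicator (ball (0::'a) r) x \<partial>lebesgue)"
    using iS0 iball by simp
  finally show "(\<integral>x. indicator (ball 0 r) x * w x powr S \<partial>lebesgue)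
       \<le> \<tau> powr (S - S0) * (\<integral>x. indicator (ball 0 r) x * w x powr S0 \<partial>lebesgue)
         + \<tau> powr S * (r^DIM('a) * measure lebesgue (ball (0::'a) 1))"
    using integral_indicator_ball[OF r, where 'a='a] by simp
qed

lemma growth_imp_ball_integral_le:
  fixes w :: "'a::euclidean_space \<Rightarrow> real"
  assumes wm: "w \<in> borel_measurable lebesgue"
    and growth: "\<forall>R\<ge>1. (\<integral>\<^sup>+ x \<in> ball 0 (2 * R). ennreal (w x powr S0) \<partial>lebesgue) \<le> ennreal (C * R powr lam)"
    and C: "C > 0" and R: "R \<ge> 1"
  shows "integrable lebesgue (\<lambda>x. indicator (ball 0 (2*R)) x * w x powr S0)"
    "(\<integral>x. indicator (ball 0 (2*R)) x * w x powr S0 \<partial>lebesgue) \<le> C * R powr lam"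
proof -
  note wm[measurable]
  have [measurable]: "ball (0::'a) (2*R) \<in> sets lebesgue" by simp
  have "(\<integral>\<^sup>+x. ennreal (indicator (ball 0 (2*R)) x * w x powr S0) \<partial>lebesgue)
      = (\<integral>\<^sup>+ x \<in> ball 0 (2 * R). ennreal (w x powr S0) \<partial>lebesgue)"
    by (intro nn_integral_cong) (simp add: indicator_def)
  then have "(\<integral>\<^sup>+x. ennreal (indicator (ball 0 (2*R)) x * w x powr S0) \<partial>lebesgue) \<le> ennreal (C * R powr lam)"
    using growth R by auto
  from nn_integral_le_imp_integrable[OF _ _ this] C
  show "integrable lebesgue (\<lambda>x. indicator (ball 0 (2*R)) x * w x powr S0)"
    "(\<integral>x. indicator (ball 0 (2*R)) x * w x powr S0 \<partial>lebesgue) \<le> C * R powr lam"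
    by auto
qed

lemma integrable_ball_weight_powr:
  fixes w :: "'a::euclidean_space \<Rightarrow> real"
  assumes wm: "w \<in> borel_measurable lebesgue" and w0: "AE x in lebesgue. 0 \<le> w x"
    and growth: "\<forall>R\<ge>1. (\<integral>\<^sup>+ x \<in> ball 0 (2 * R). ennreal (w x powr S0) \<partial>lebesgue) \<le> ennreal (C * R powr lam)"
    and C: "C > 0" and S: "0 < S" "S \<le> S0" and R: "R \<ge> 1"
  shows "integrable lebesgue (\<lambda>x. indicator (ball 0 (2*R)) x * w x powr S)"
  using ball_integral_powr_le(1)[OF wm w0 growth_imp_ball_integral_le(1)[OF wm growth C R] _ _ S, of 1] R
  by simp

lemma ball_weight_integral_le:
  fixes w :: "'a::euclidean_space \<Rightarrow> real"
  assumes wm: "w \<in> borel_measurable lebesgue" and w0: "AE x in lebesgue. 0 \<le> w x"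
    and growth: "\<forall>R\<ge>1. (\<integral>\<^sup>+ x \<in> ball 0 (2 * R). ennreal (w x powr S0) \<partial>lebesgue) \<le> ennreal (C * R powr lam)"
    and C: "C > 0" and S: "0 < S" "S \<le> S0" and R: "R \<ge> 1"
  defines "N \<equiv> real DIM('a)"
  shows "R powr (-p*S) * (\<integral>x. indicator (ball 0 (2*R)) x * w x powr S \<partial>lebesgue)
    \<le> C * R powr ((N+1)*(S0-S) + lam - p*S)
      + 2^DIM('a) * measure lebesgue (ball (0::'a) 1) * R powr (N - (N+1)*S - p*S)"
proof -
  define V where "V = 2^DIM('a) * measure lebesgue (ball (0::'a) 1)"
  define \<tau> where "\<tau> = R powr (-(N+1))"
  have Rp: "R > 0" and t: "\<tau> > 0" using R unfolding \<tau>_def by auto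
  note I0 = growth_imp_ball_integral_le[OF wm growth C R]
  let ?vol = "(2*R)^DIM('a) * measure lebesgue (ball (0::'a) 1)"
  have "(\<integral>x. indicator (ball 0 (2*R)) x * w x powr S \<partial>lebesgue)
     \<le> \<tau> powr (S - S0) * (\<integral>x. indicator (ball 0 (2*R)) x * w x powr S0 \<partial>lebesgue) + \<tau> powr S * ?vol"
    using ball_integral_powr_le(2)[OF wm w0 I0(1) _ t S] R by simp
  also have "\<dots> \<le> \<tau> powr (S - S0) * (C * R powr lam) + \<tau> powr S * ?vol"
    using I0(2) by (simp add: mult_left_mono)
  finally have "R powr (-p*S) * (\<integral>x. indicator (ball 0 (2*R)) x * w x powr S \<partial>lebesgue)
     \<le> R powr (-p*S) * (\<tau> powr (S - S0) * (C * R powr lam)) + R powr (-p*S) * (\<tau> powr S * ?vol)"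
    by (simp add: mult_left_mono flip: distrib_left)
  also have "R powr (-p*S) * (\<tau> powr (S - S0) * (C * R powr lam))
      = C * (R powr (-p*S) * R powr (-(N+1)*(S-S0)) * R powr lam)"
    unfolding \<tau>_def using Rp by (simp add: powr_powr algebra_simps)
  also have "\<dots> = C * R powr ((N+1)*(S0-S) + lam - p*S)" by (simp add: powr_add[symmetric] algebra_simps)
  also have "?vol = V * R powr N"
    unfolding V_def N_def using Rp by (simp add: power_mult_distrib powr_realpow)
  then have "R powr (-p*S) * (\<tau> powr S * ?vol) = V * (R powr (-p*S) * R powr (-(N+1)*S) * R powr N)"
    unfolding \<tau>_def using Rp by (simp add: powr_powr algebra_simps)
  also have "\<dots> = V * R powr (N - (N+1)*S - p*S)" by (simp add: powr_add[symmetric] algebra_simps)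
  finally show ?thesis unfolding V_def .
qed

lemma ball_weight_integral_tendsto_0:
  fixes w :: "'a::euclidean_space \<Rightarrow> real"
  assumes wm: "w \<in> borel_measurable lebesgue" and w0: "AE x in lebesgue. 0 \<le> w x"
    and growth: "\<forall>R\<ge>1. (\<integral>\<^sup>+ x \<in> ball 0 (2 * R). ennreal (w x powr S0) \<partial>lebesgue) \<le> ennreal (C * R powr lam)"
    and C: "C > 0" and S: "1 \<le> S" "S \<le> S0" and p: "p \<ge> 0"
    and cond: "(real DIM('a) + 1 + p) * (S0 - S) < p * S0 - lam"
  shows "((\<lambda>R. R powr (-p*S) * (\<integral>x. indicator (ball 0 (2*R)) x * w x powr S \<partial>lebesgue)) \<longlongrightarrow> 0) at_top"
proof -
  define N where "N = real DIM('a)"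
  define V where "V = 2^DIM('a) * measure lebesgue (ball (0::'a) 1)"
  define e1 where "e1 = (N+1)*(S0-S) + lam - p*S"
  define e2 where "e2 = N - (N+1)*S - p*S"
  have e1: "e1 < 0" using cond unfolding e1_def N_def by (simp add: algebra_simps)
  have "N*1 \<le> N*S" "0 \<le> p*S" using S p by (auto intro: mult_left_mono simp: N_def)
  then have e2: "e2 < 0" unfolding e2_def using S by (simp add: algebra_simps)
  have "((\<lambda>R. C * R powr e1 + V * R powr e2) \<longlongrightarrow> C * 0 + V * 0) at_top"
    by (intro tendsto_intros tendsto_neg_powr[OF e1 filterlim_ident] tendsto_neg_powr[OF e2 filterlim_ident])
  then have lim: "((\<lambda>R. C * R powr e1 + V * R powr e2) \<longlongrightarrow> 0) at_top" by simp
  have nonneg: "\<forall>\<^sub>F R in at_top. 0 \<le> R powr (-p*S) * (\<integral>x. indicator (ball 0 (2*R)) x * w x powr S \<partial>lebesgue)"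
    by (intro always_eventually allI mult_nonneg_nonneg integral_nonneg_AE) (auto intro: eventually_mono[OF w0])
  have "\<forall>\<^sub>F R in at_top. R powr (-p*S) * (\<integral>x. indicator (ball 0 (2*R)) x * w x powr S \<partial>lebesgue)
      \<le> C * R powr e1 + V * R powr e2"
    using eventually_ge_at_top[of 1]
  proof eventually_elim
    case (elim R)
    show ?case using ball_weight_integral_le[OF wm w0 growth C _ S(2) elim] S
      unfolding e1_def e2_def V_def N_def by simp
  qed
  from tendsto_sandwich[OF nonneg this tendsto_const lim] show ?thesis .
qed

section \<open>Stable solutions\<close>

locale stable_solution_setting = positive_solution_setting +
  fixes M :: real
  assumes weak: "weak_solution p \<delta> \<delta> w g u" and stab: "stable_solution p \<delta> \<delta> w g u"
    and wpos: "AE x in lebesgue. 0 < w x" and gpos: "AE x in lebesgue. 0 < g x"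
    and gM: "AE x in lebesgue. 1 / g x \<le> M" and Mpos: "M > 0"
    and alpos: "\<alpha> > 0" and cpos: "\<delta>*(2*\<alpha>+1) - (p-1)*\<alpha>^2 > 0"
    and apos: "a_exp > 0" and ab: "b_exp > a_exp" and kp: "2*real k > p"
    and mpos: "S_exp * (2*real k - p - 2*real k*a_exp/b_exp) \<ge> 0"
begin

lemma w_nonneg_AE: "AE x in lebesgue. 0 \<le> w x" using wpos by (auto elim: eventually_mono)

lemma weak_identity:
  assumes R: "R > 0"
  shows "2 * integral\<^sup>L lebesgue (mixed_term R) - (2*\<alpha>+1) * integral\<^sup>L lebesgue (grad_term R)
    = -2 * integral\<^sup>L lebesgue (source_term R)"
proof -
  let ?\<phi> = "\<lambda>x. u x powr (-(2*\<alpha>+1)) * cutoff_pow k R x ^ 2"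
  have C: "C1c_fun ?\<phi>" and G: "grad ?\<phi> = test_grad u (-(2*\<alpha>+1)) 2 k R"
    using test_fun_C1c[OF uC1 upos kk R, of 2 "-(2*\<alpha>+1)"] by auto
  have weak_eq: "(\<integral>x. w x * rpow (norm (grad u x)) (p - 2) * (grad u x \<bullet> test_grad u (-(2*\<alpha>+1)) 2 k R x) \<partial>lebesgue)
     = (\<integral>x. g x * fsing \<delta> \<delta> (u x) * ?\<phi> x \<partial>lebesgue)"
    using weak C G unfolding weak_solution_def by auto
  have lhs: "(\<lambda>x. w x * rpow (norm (grad u x)) (p - 2) * (grad u x \<bullet> test_grad u (-(2*\<alpha>+1)) 2 k R x))
     = (\<lambda>x. 2 * mixed_term R x - (2*\<alpha>+1) * grad_term R x)"
    using weak_integrand_eq unfolding grad_norm_def by auto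
  have rhs: "(\<lambda>x. g x * fsing \<delta> \<delta> (u x) * ?\<phi> x) = (\<lambda>x. -2 * source_term R x)"
    using weak_source_integrand_eq by auto
  have "(\<integral>x. 2 * mixed_term R x - (2*\<alpha>+1) * grad_term R x \<partial>lebesgue)
      = 2 * integral\<^sup>L lebesgue (mixed_term R) - (2*\<alpha>+1) * integral\<^sup>L lebesgue (grad_term R)"
    using integrable_mixed_term[OF R] integrable_grad_term[OF R] by simp
  then show ?thesis using weak_eq unfolding lhs rhs by simp
qed

text \<open>
  By Cauchy-Schwarz the middle term of the stability form is at most \<open>p - 2\<close> times the
  first one, so stability yields \<open>(p-1) \<integral> w |\<nabla>u|\<^sup>p\<^sup>-\<^sup>2 |\<nabla>\<phi>|\<^sup>2 \<ge> \<integral> g f'(u) \<phi>\<^sup>2\<close>.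
\<close>
lemma stability_inequality:
  assumes R: "R > 0"
  shows "(p-1) * (integral\<^sup>L lebesgue (cutoff_term R) - 2*\<alpha> * integral\<^sup>L lebesgue (mixed_term R)
      + \<alpha>^2 * integral\<^sup>L lebesgue (grad_term R)) \<ge> 2*\<delta> * integral\<^sup>L lebesgue (source_term R)"
proof -
  let ?\<phi> = "\<lambda>x. u x powr (-\<alpha>) * cutoff_pow k R x ^ 1"
  have C: "C1c_fun ?\<phi>" and G: "grad ?\<phi> = test_grad u (-\<alpha>) 1 k R"
    using test_fun_C1c[OF uC1 upos kk R, of 1 "-\<alpha>"] by auto
  define first where "first = (\<lambda>x. cutoff_term R x - 2*\<alpha> * mixed_term R x + \<alpha>^2 * grad_term R x)"
  define middle where "middle = (\<lambda>x. if grad u x = 0 then 0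
    else w x * norm (grad u x) powr (p - 4) * (grad u x \<bullet> test_grad u (-\<alpha>) 1 k R x)\<^sup>2)"
  have stable: "(\<integral>x. w x * rpow (norm (grad u x)) (p - 2) * (norm (test_grad u (-\<alpha>) 1 k R x))\<^sup>2 \<partial>lebesgue)
      + (p - 2) * integral\<^sup>L lebesgue middle
      - (\<integral>x. g x * fsing' \<delta> \<delta> (u x) * (?\<phi> x)\<^sup>2 \<partial>lebesgue) \<ge> 0"
    using stab[unfolded stable_solution_def, rule_format, OF C] unfolding G middle_def .
  have first_eq: "(\<lambda>x. w x * rpow (norm (grad u x)) (p - 2) * (norm (test_grad u (-\<alpha>) 1 k R x))\<^sup>2) = first"
    using stability_grad_integrand_eq unfolding grad_norm_def first_def by auto
  have source_eq: "(\<lambda>x. g x * fsing' \<delta> \<delta> (u x) * (?\<phi> x)\<^sup>2) = (\<lambda>x. 2*\<delta> * source_term R x)"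
    using stability_source_integrand_eq by auto
  note ints = integrable_mixed_term[OF R] integrable_grad_term[OF R] integrable_cutoff_term[OF R]
  have first_int: "integral\<^sup>L lebesgue first = integral\<^sup>L lebesgue (cutoff_term R)
      - 2*\<alpha> * integral\<^sup>L lebesgue (mixed_term R) + \<alpha>^2 * integral\<^sup>L lebesgue (grad_term R)"
    unfolding first_def using ints by (simp add: integral_diff)
  have "AE x in lebesgue. middle x \<le> first x \<and> 0 \<le> first x"
    using w_nonneg_AE
  proof eventually_elim
    case (elim x)
    let ?v = "test_grad u (-\<alpha>) 1 k R x"
    have "first x = w x * rpow (grad_norm x) (p-2) * (norm ?v)^2"
      unfolding first_def by (rule stability_grad_integrand_eq[symmetric])
    moreover have "0 \<le> w x * rpow (grad_norm x) (p-2) * (norm ?v)^2"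
      using elim grad_weight_nonneg[of x] unfolding grad_weight_def by simp
    moreover have "middle x \<le> w x * rpow (grad_norm x) (p-2) * (norm ?v)^2"
      unfolding middle_def by (rule stability_middle_integrand_le[OF elim])
    ultimately show ?case by simp
  qed
  then have "integral\<^sup>L lebesgue middle \<le> integral\<^sup>L lebesgue first"
    unfolding first_def using ints by (intro integral_mono_AE') auto
  then have "(p-2) * integral\<^sup>L lebesgue middle \<le> (p-2) * integral\<^sup>L lebesgue first"
    using p2 by (intro mult_left_mono) auto
  with stable show ?thesis unfolding first_eq source_eq first_int[symmetric] by (simp add: algebra_simps)
qed

lemma abs_mixed_integral_le:
  assumes R: "R > 0"
  shows "\<bar>integral\<^sup>L lebesgue (mixed_term R)\<bar> \<le> integral\<^sup>L lebesgue (mixed_bound R)"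
proof -
  have "\<bar>integral\<^sup>L lebesgue (mixed_term R)\<bar> \<le> (\<integral>x. \<bar>mixed_term R x\<bar> \<partial>lebesgue)"
    by (rule integral_abs_bound)
  also have "\<dots> \<le> integral\<^sup>L lebesgue (mixed_bound R)"
    using integrable_mixed_term[OF R] integrable_mixed_bound[OF R]
    by (intro integral_mono_AE) (auto intro: eventually_mono[OF w_nonneg_AE] abs_mixed_term_le)
  finally show ?thesis .
qed

lemma mixed_bound_integral_le:
  assumes R: "R > 0" and eps: "\<epsilon> > 0"
  shows "integral\<^sup>L lebesgue (mixed_bound R)
    \<le> \<epsilon> * integral\<^sup>L lebesgue (grad_term R) + integral\<^sup>L lebesgue (cutoff_term R) / (4*\<epsilon>)"
proof -
  note ints = integrable_mixed_bound[OF R] integrable_grad_term[OF R] integrable_cutoff_term[OF R]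
  have "integral\<^sup>L lebesgue (mixed_bound R) \<le> (\<integral>x. \<epsilon> * grad_term R x + cutoff_term R x / (4*\<epsilon>) \<partial>lebesgue)"
    using ints by (intro integral_mono_AE) (auto intro: eventually_mono[OF w_nonneg_AE] mixed_bound_le[OF _ eps])
  also have "\<dots> = \<epsilon> * integral\<^sup>L lebesgue (grad_term R) + integral\<^sup>L lebesgue (cutoff_term R) / (4*\<epsilon>)"
    using ints by simp
  finally show ?thesis .
qed

lemma cutoff_integral_le:
  assumes R: "R > 0" and eps: "\<epsilon> > 0"
  shows "integral\<^sup>L lebesgue (cutoff_term R) \<le> (real k)^2 *
    (\<epsilon> * integral\<^sup>L lebesgue (grad_term R) + cutoff_const p \<epsilon> * integral\<^sup>L lebesgue (remainder_term R))"
proof -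
  note ints = integrable_cutoff_term[OF R] integrable_grad_term[OF R] integrable_remainder_term[OF R kp]
  have "integral\<^sup>L lebesgue (cutoff_term R)
      \<le> (\<integral>x. (real k)^2 * (\<epsilon> * grad_term R x + cutoff_const p \<epsilon> * remainder_term R x) \<partial>lebesgue)"
    using ints by (intro integral_mono_AE) (auto intro: eventually_mono[OF w_nonneg_AE] cutoff_term_le[OF _ R eps kp])
  also have "\<dots> = (real k)^2 *
      (\<epsilon> * integral\<^sup>L lebesgue (grad_term R) + cutoff_const p \<epsilon> * integral\<^sup>L lebesgue (remainder_term R))"
    using ints by simp
  finally show ?thesis .
qed

lemma remainder_integral_le:
  assumes R: "R > 0" and eps: "\<epsilon> > 0"
    and iW: "integrable lebesgue (\<lambda>x. indicator (ball 0 (2*R)) x * w x powr S_exp)"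
  shows "integral\<^sup>L lebesgue (remainder_term R) \<le> \<epsilon> * M * integral\<^sup>L lebesgue (source_term R)
    + young_const (a_exp/b_exp) \<epsilon> * (R powr (-p*S_exp) * (\<integral>x. indicator (ball 0 (2*R)) x * w x powr S_exp \<partial>lebesgue))"
proof -
  note ints = integrable_remainder_term[OF R kp] integrable_source_term[OF R]
  have ae: "AE x in lebesgue. 0 < w x \<and> 0 < g x \<and> 1 / g x \<le> M"
    using wpos gpos gM by eventually_elim auto
  have "integral\<^sup>L lebesgue (remainder_term R) \<le> (\<integral>x. \<epsilon> * M * source_term R x
      + young_const (a_exp/b_exp) \<epsilon> * (indicator (ball 0 (2*R)) x * w x powr S_exp) * R powr (-p*S_exp) \<partial>lebesgue)"
  proof (rule integral_mono_AE)
    show "AE x in lebesgue. remainder_term R x \<le> \<epsilon> * M * source_term R x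
      + young_const (a_exp/b_exp) \<epsilon> * (indicator (ball 0 (2*R)) x * w x powr S_exp) * R powr (-p*S_exp)"
      using ae by eventually_elim (use remainder_term_le[OF _ _ _ R apos ab kp mpos eps] in auto)
  qed (use ints iW in auto)
  also have "\<dots> = (\<integral>x. \<epsilon> * M * source_term R x \<partial>lebesgue) + (\<integral>x.
      young_const (a_exp/b_exp) \<epsilon> * (indicator (ball 0 (2*R)) x * w x powr S_exp) * R powr (-p*S_exp) \<partial>lebesgue)"
    by (rule Bochner_Integration.integral_add) (use ints iW in auto)
  also have "\<dots> = \<epsilon> * M * integral\<^sup>L lebesgue (source_term R)
      + young_const (a_exp/b_exp) \<epsilon> * (R powr (-p*S_exp) * (\<integral>x. indicator (ball 0 (2*R)) x * w x powr S_exp \<partial>lebesgue))"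
    by simp
  finally show ?thesis .
qed

lemma grad_integral_nonneg: "integral\<^sup>L lebesgue (grad_term R) \<ge> 0"
  by (rule integral_nonneg_AE) (auto intro: eventually_mono[OF w_nonneg_AE] grad_term_nonneg)

lemma source_integral_nonneg: "integral\<^sup>L lebesgue (source_term R) \<ge> 0"
  by (rule integral_nonneg_AE) (auto intro: eventually_mono[OF gpos] simp: source_term_def)

lemma grad_and_source_integral_le_cutoff:
  obtains KA KB where "KA \<ge> 0" "KB \<ge> 0" "\<And>R. R > 0 \<Longrightarrow>
    integral\<^sup>L lebesgue (grad_term R) \<le> KA * integral\<^sup>L lebesgue (cutoff_term R) \<and>
    integral\<^sup>L lebesgue (source_term R) \<le> KB * integral\<^sup>L lebesgue (cutoff_term R)"
proof -
  obtain KA KB where KA: "KA \<ge> 0" and KB: "KB \<ge> 0" and KAB: "\<And>A B X Y D.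
      2*X - (2*\<alpha>+1)*A = -2*B \<Longrightarrow> (p-1)*(D - 2*\<alpha>*X + \<alpha>^2*A) \<ge> 2*\<delta>*B \<Longrightarrow>
      \<bar>X\<bar> \<le> Y \<Longrightarrow> (\<And>\<epsilon>. \<epsilon> > 0 \<Longrightarrow> Y \<le> \<epsilon>*A + D/(4*\<epsilon>)) \<Longrightarrow> 0 \<le> A \<Longrightarrow>
      A \<le> KA*D \<and> B \<le> KB*D"
    using grad_and_source_le_cutoff[OF cpos _ less_imp_le[OF alpos]] p2 by auto
  have bound: "integral\<^sup>L lebesgue (grad_term R) \<le> KA * integral\<^sup>L lebesgue (cutoff_term R) \<and>
      integral\<^sup>L lebesgue (source_term R) \<le> KB * integral\<^sup>L lebesgue (cutoff_term R)" if R: "R > 0" for R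
    using weak_identity[OF R] stability_inequality[OF R] abs_mixed_integral_le[OF R]
      mixed_bound_integral_le[OF R] grad_integral_nonneg by (intro KAB)
  show thesis by (rule that[OF KA KB bound])
qed

text \<open>
  The cut-off integral is absorbed into the gradient integral, leaving \<open>B \<le> K T\<close>; then the
  remainder \<open>T\<close> is absorbed into \<open>B\<close> up to the weighted integral of \<open>w\<^sup>S\<close>.
\<close>
lemma source_integral_bound:
  obtains K where "\<And>R. R \<ge> 1 \<Longrightarrow> integrable lebesgue (\<lambda>x. indicator (ball 0 (2*R)) x * w x powr S_exp) \<Longrightarrow>
    integral\<^sup>L lebesgue (source_term R)
      \<le> K * (R powr (-p*S_exp) * (\<integral>x. indicator (ball 0 (2*R)) x * w x powr S_exp \<partial>lebesgue))"
proof -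
  obtain KA KB where KA: "KA \<ge> 0" and KB: "KB \<ge> 0" and KAB: "\<And>R. R > 0 \<Longrightarrow>
      integral\<^sup>L lebesgue (grad_term R) \<le> KA * integral\<^sup>L lebesgue (cutoff_term R) \<and>
      integral\<^sup>L lebesgue (source_term R) \<le> KB * integral\<^sup>L lebesgue (cutoff_term R)"
    by (rule grad_and_source_integral_le_cutoff) blast
  define kk where "kk = (real k)^2"
  define C where "C = cutoff_const p"
  define KAT where "KAT = 2 * (KA*kk) * C (1 / (2*(KA*kk) + 1))"
  define KBT where "KBT = KB * kk * (KAT + C 1)"
  define CW where "CW = (\<lambda>\<epsilon>. young_const (a_exp/b_exp) (\<epsilon>/M))"
  have kk: "kk > 0" unfolding kk_def using kk by simp
  have KBT: "KBT \<ge> 0"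
    unfolding KBT_def KAT_def C_def using KA KB kk cutoff_const_nonneg[OF p2] by simp
  show thesis
  proof (rule that[of "2 * KBT * CW (1 / (2*KBT + 1))"])
    fix R :: real
    assume R1: "R \<ge> 1" and iW: "integrable lebesgue (\<lambda>x. indicator (ball 0 (2*R)) x * w x powr S_exp)"
    have R: "R > 0" using R1 by simp
    define A where "A = integral\<^sup>L lebesgue (grad_term R)"
    define B where "B = integral\<^sup>L lebesgue (source_term R)"
    define D where "D = integral\<^sup>L lebesgue (cutoff_term R)"
    define T where "T = integral\<^sup>L lebesgue (remainder_term R)"
    define J where "J = R powr (-p*S_exp) * (\<integral>x. indicator (ball 0 (2*R)) x * w x powr S_exp \<partial>lebesgue)"
    have A: "A \<ge> 0" and B: "B \<ge> 0"
      unfolding A_def B_def using grad_integral_nonneg source_integral_nonneg .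
    have AD: "A \<le> (KA*kk) * (D/kk)" and BD: "B \<le> KB*D"
      using KAB[OF R] kk unfolding A_def B_def D_def by auto
    have DA: "D/kk \<le> \<epsilon>*A + C \<epsilon> * T" if "\<epsilon> > 0" for \<epsilon>
      using cutoff_integral_le[OF R that] kk unfolding A_def D_def T_def C_def kk_def
      by (simp add: field_simps)
    have "A \<le> KAT * T"
      unfolding KAT_def by (rule absorb_le[OF A _ AD DA]) (use KA kk in auto)
    then have "kk * (A + C 1 * T) \<le> kk * (KAT * T + C 1 * T)" using kk by simp
    moreover have "D \<le> kk * (A + C 1 * T)" using DA[of 1] kk by (simp add: field_simps)
    ultimately have "D \<le> kk * (KAT * T + C 1 * T)" by linarith
    then have "KB * D \<le> KB * (kk * (KAT * T + C 1 * T))" using KB by (rule mult_left_mono)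
    then have "B \<le> KBT * T" unfolding KBT_def using BD by (simp add: algebra_simps)
    moreover have "T \<le> \<epsilon> * B + CW \<epsilon> * J" if "\<epsilon> > 0" for \<epsilon>
      using remainder_integral_le[OF R _ iW, of "\<epsilon>/M"] that Mpos
      unfolding T_def B_def J_def CW_def by simp
    ultimately show "B \<le> 2 * KBT * CW (1 / (2*KBT + 1)) * J"
      by (intro absorb_le[OF B KBT]) auto
  qed
qed

lemma source_integral_mono:
  assumes R: "R \<ge> 1"
  shows "integral\<^sup>L lebesgue (source_term 1) \<le> integral\<^sup>L lebesgue (source_term R)"
proof (rule integral_mono_AE[OF integrable_source_term integrable_source_term])
  show "AE x in lebesgue. source_term 1 x \<le> source_term R x"
  proof (rule eventually_mono[OF gpos])
    fix x assume g: "0 < g x"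
    have "cutoff 1 x \<le> cutoff R x" using R by (intro cutoff_mono) auto
    then have "cutoff_pow k 1 x \<le> cutoff_pow k R x" unfolding cutoff_pow_def using cutoff_range(1)[of 1 x] by (intro power_mono) auto
    then have "(cutoff_pow k 1 x)^2 \<le> (cutoff_pow k R x)^2" using cutoff_pow_nonneg[of 1 x] by (intro power_mono) auto
    then show "source_term 1 x \<le> source_term R x" unfolding source_term_def using g by (simp add: mult_left_mono)
  qed
qed (use R in auto)

lemma source_integral_pos: "integral\<^sup>L lebesgue (source_term 1) > 0"
proof -
  have nn: "AE x in lebesgue. 0 \<le> source_term 1 x" by (rule eventually_mono[OF gpos]) (simp add: source_term_def)
  have ge: "integral\<^sup>L lebesgue (source_term 1) \<ge> 0" by (rule integral_nonneg_AE[OF nn])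
  show ?thesis
  proof (rule ccontr)
    assume "\<not> ?thesis"
    then have "integral\<^sup>L lebesgue (source_term 1) = 0" using ge by auto
    then have z: "AE x in lebesgue. source_term 1 x = 0" using integral_nonneg_eq_0_iff_AE[OF integrable_source_term nn] by auto
    have "AE x in lebesgue. x \<notin> ball (0::'a) 1"
      using z gpos
    proof eventually_elim
      case (elim x)
      show "x \<notin> ball (0::'a) 1"
      proof
        assume "x \<in> ball (0::'a) 1"
        then have "cutoff 1 x \<ge> 3/4" by (intro cutoff_ge_three_quarters) auto
        then have "cutoff_pow k 1 x > 0" unfolding cutoff_pow_def by simp
        moreover have "u x powr (-(\<delta>+2*\<alpha>+1)) > 0" using upos[rule_format, of x] by simp
        ultimately have "source_term 1 x > 0" unfolding source_term_def using elim(2) by (intro mult_pos_pos) auto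
        then show False using elim(1) by simp
      qed
    qed
    then have "emeasure lebesgue (ball (0::'a) 1) = 0"
      by (subst (asm) AE_iff_measurable[where N="ball 0 1"]) auto
    moreover have "Henstock_Kurzweil_Integration.content (ball (0::'a) 1) > 0" by (rule content_ball_pos) simp
    ultimately show False
      using emeasure_lborel_ball_finite[of "0::'a" 1] by (simp add: measure_def)
  qed
qed

lemma S_exp_ge_1: "S_exp \<ge> 1"
  unfolding S_exp_def using apos ab by (simp add: field_simps)

lemma weight_growth_contradiction:
  assumes growth: "\<forall>R\<ge>1. (\<integral>\<^sup>+ x \<in> ball 0 (2 * R). ennreal (w x powr S0) \<partial>lebesgue) \<le> ennreal (C * R powr lam)"
    and C: "C > 0" and S0: "S_exp \<le> S0"
    and cond: "(real DIM('a) + 1 + p) * (S0 - S_exp) < p * S0 - lam"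
  shows False
proof -
  have wm: "w \<in> borel_measurable lebesgue" by (rule locally_integrable_measurable[OF w_loc])
  obtain K where K: "\<And>R. R \<ge> 1 \<Longrightarrow> integrable lebesgue (\<lambda>x. indicator (ball 0 (2*R)) x * w x powr S_exp) \<Longrightarrow>
      integral\<^sup>L lebesgue (source_term R)
        \<le> K * (R powr (-p*S_exp) * (\<integral>x. indicator (ball 0 (2*R)) x * w x powr S_exp \<partial>lebesgue))"
    by (rule source_integral_bound) blast
  have "((\<lambda>R. K * (R powr (-p*S_exp) * (\<integral>x. indicator (ball 0 (2*R)) x * w x powr S_exp \<partial>lebesgue))) \<longlongrightarrow> 0) at_top"
    using ball_weight_integral_tendsto_0[OF wm w_nonneg_AE growth C S_exp_ge_1 S0 _ cond] p2
    by (intro tendsto_mult_right_zero) simp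
  then have "\<forall>\<^sub>F R in at_top.
      K * (R powr (-p*S_exp) * (\<integral>x. indicator (ball 0 (2*R)) x * w x powr S_exp \<partial>lebesgue))
        < integral\<^sup>L lebesgue (source_term 1)"
    using source_integral_pos by (rule order_tendstoD)
  then obtain R0 where "\<forall>R\<ge>R0.
      K * (R powr (-p*S_exp) * (\<integral>x. indicator (ball 0 (2*R)) x * w x powr S_exp \<partial>lebesgue))
        < integral\<^sup>L lebesgue (source_term 1)"
    unfolding eventually_at_top_linorder by blast
  then obtain R where R: "R \<ge> 1" and lt:
      "K * (R powr (-p*S_exp) * (\<integral>x. indicator (ball 0 (2*R)) x * w x powr S_exp \<partial>lebesgue))
        < integral\<^sup>L lebesgue (source_term 1)"
    by (meson max.cobounded1 max.cobounded2)
  have "integrable lebesgue (\<lambda>x. indicator (ball 0 (2*R)) x * w x powr S_exp)"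
    using integrable_ball_weight_powr[OF wm w_nonneg_AE growth C _ S0 R] S_exp_ge_1 by simp
  with K[OF R] lt source_integral_mono[OF R] show False by linarith
qed

end

section \<open>Choice of the exponent\<close>

lemma class_Pa_gt2_bound:
  fixes \<delta> p :: real
  assumes p: "p > 2" and Pa: "class_Pa \<delta> p" and d: "\<delta> \<ge> 1"
  shows "4*\<delta> > (p-1)^2"
  using Pa p unfolding class_Pa_def
proof (elim disjE conjE)
  assume "2 \<le> p" "p < 3"
  then have "(p-1)^2 < 2^2" by (intro power_strict_mono) auto
  then show ?thesis using d by simp
qed simp_all

lemma S_pa_gt2_eq:
  fixes \<delta> p :: real
  assumes p: "p > 2" and d: "\<delta> \<ge> 1"
  shows "S_pa \<delta> p = (\<delta> + 2*(2*\<delta>/(p-1) - 1/2) + 1)/(\<delta>+p-1)"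
proof -
  define q where "q = p - 1"
  have qp: "q > 0" "q \<noteq> 0" "\<delta> + q \<noteq> 0" "q + \<delta> \<noteq> 0" unfolding q_def using p d by auto
  have den: "\<delta>+p-1 = \<delta> + q" unfolding q_def by simp
  have num: "\<delta> + 2*(2*\<delta>/(p-1) - 1/2) + 1 = \<delta> + 4*\<delta>/q" unfolding q_def[symmetric] using qp by (simp add: field_simps)
  have S: "S_pa \<delta> p = 1 + 2*(2*\<delta>/q - q/2)/(q+\<delta>)"
    unfolding S_pa_def s_p_def q_def using p by simp
  have "1 + 2*(2*\<delta>/q - q/2)/(q+\<delta>) = (\<delta> + 4*\<delta>/q)/(\<delta>+q)"
  proof -
    have a: "2*(2*\<delta>/q - q/2) = 4*\<delta>/q - q" by (simp add: algebra_simps)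
    have b: "1 = (q+\<delta>)/(q+\<delta>)" using qp by simp
    have "1 + (4*\<delta>/q - q)/(q+\<delta>) = ((q+\<delta>) + (4*\<delta>/q - q))/(q+\<delta>)"
      by (subst b) (simp only: add_divide_distrib)
    also have "\<dots> = (\<delta> + 4*\<delta>/q)/(\<delta>+q)" by (simp add: algebra_simps)
    finally show ?thesis unfolding a .
  qed
  moreover have "(\<delta> + 2*(2*\<delta>/(p-1) - 1/2) + 1)/(\<delta>+p-1) = (\<delta> + 4*\<delta>/q)/(\<delta>+q)"
    by (subst den, subst num, rule refl)
  ultimately show ?thesis unfolding S by simp
qed

lemma exponent_choice_gt2:
  fixes \<delta> p :: real
  assumes p: "p > 2" and Pa: "class_Pa \<delta> p" and d: "\<delta> \<ge> 1"
  defines "\<alpha> \<equiv> 2*\<delta>/(p-1) - 1/2"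
  shows "\<alpha> > 0" "\<delta>*(2*\<alpha>+1) - (p-1)*\<alpha>^2 > 0" "2*\<alpha>+2-p > 0"
    "(\<delta>+2*\<alpha>+1)/(\<delta>+p-1) = S_pa \<delta> p"
proof -
  have q: "4*\<delta> > (p-1)^2" by (rule class_Pa_gt2_bound[OF p Pa d])
  have p1: "p - 1 > 1" using p by simp
  have "(p-1) \<le> (p-1)^2" using p1 by (simp add: power2_eq_square)
  then have q2: "4*\<delta> > p - 1" using q by linarith
  show "\<alpha> > 0" unfolding \<alpha>_def using q2 p1 by (simp add: field_simps)
  show "2*\<alpha>+2-p > 0" unfolding \<alpha>_def using q p1 by (simp add: field_simps power2_eq_square)
  have "\<delta>*(2*\<alpha>+1) - (p-1)*\<alpha>^2 = 2*\<delta> - (p-1)/4"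
  proof -
    define q where "q = p - 1"
    have qn: "q \<noteq> 0" unfolding q_def using p1 by simp
    have "\<delta>*(2*(2*\<delta>/q - 1/2)+1) - q*(2*\<delta>/q - 1/2)^2 = 2*\<delta> - q/4"
      using qn by (simp add: field_simps power2_eq_square)
    then show ?thesis unfolding \<alpha>_def q_def .
  qed
  then show "\<delta>*(2*\<alpha>+1) - (p-1)*\<alpha>^2 > 0" using q2 d by simp
  show "(\<delta>+2*\<alpha>+1)/(\<delta>+p-1) = S_pa \<delta> p"
    unfolding \<alpha>_def by (rule S_pa_gt2_eq[OF p d, symmetric])
qed

lemma exponent_choice_eq2:
  fixes \<delta> \<epsilon> :: real
  assumes d: "\<delta> \<ge> 1" and eps: "\<epsilon> > 0"
  obtains \<alpha> where "\<alpha> > 0" "\<delta>*(2*\<alpha>+1) - \<alpha>^2 > 0"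
    "(\<delta>+2*\<alpha>+1)/(\<delta>+1) \<le> S_pa \<delta> 2" "S_pa \<delta> 2 - (\<delta>+2*\<alpha>+1)/(\<delta>+1) < \<epsilon>"
proof -
  define r where "r = sqrt (\<delta>^2+\<delta>)"
  have r: "r \<ge> \<delta>" unfolding r_def using d by (intro real_le_rsqrt) auto
  have r2: "r^2 = \<delta>^2 + \<delta>" unfolding r_def using d by simp
  \<comment> \<open>\<open>\<delta> + r\<close> is the positive root of \<open>\<delta>(2\<alpha>+1) = \<alpha>\<^sup>2\<close>, and \<open>S\<^sub>2\<^sup>a = (\<delta>+2(\<delta>+r)+1)/(\<delta>+1)\<close>\<close>
  define t where "t = min ((\<delta> + r)/2) ((\<delta>+1)*\<epsilon>/4)"
  define \<alpha> where "\<alpha> = \<delta> + r - t"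
  have tp: "t > 0" unfolding t_def using r d eps by simp
  have t1: "t \<le> (\<delta> + r)/2" and t2: "t \<le> (\<delta>+1)*\<epsilon>/4"
    unfolding t_def by (rule min.cobounded1, rule min.cobounded2)
  have ap: "\<alpha> > 0" unfolding \<alpha>_def using t1 r d by simp
  have dn: "\<delta> + 1 \<noteq> 0" "1 + \<delta> \<noteq> 0" using d by auto
  have "S_pa \<delta> 2 = (\<delta> + 2*(\<delta>+r) + 1)/(\<delta>+1)"
    unfolding S_pa_def s_p_def r_def using dn by (simp add: field_simps)
  then have gap: "S_pa \<delta> 2 - (\<delta>+2*\<alpha>+1)/(\<delta>+1) = 2*t/(\<delta>+1)"
    unfolding \<alpha>_def using dn by (simp add: field_simps)
  have "\<delta>*(2*\<alpha>+1) - \<alpha>^2 = t * (\<alpha> + r - \<delta>)"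
    unfolding \<alpha>_def using r2 by (simp add: algebra_simps power2_eq_square)
  then have c: "\<delta>*(2*\<alpha>+1) - \<alpha>^2 > 0" using ap r tp by simp
  have "2*t/(\<delta>+1) \<le> \<epsilon>/2" using t2 d by (simp add: field_simps)
  moreover have "0 \<le> 2*t/(\<delta>+1)" using tp d by simp
  ultimately show thesis using ap c gap eps by (intro that[of \<alpha>]) linarith+
qed

lemma exists_exponent:
  fixes \<delta> p lam N :: real
  assumes p: "p \<ge> 2" and Pa: "class_Pa \<delta> p" and d: "\<delta> \<ge> 1"
    and lam: "lam < p * S_pa \<delta> p" and N: "N \<ge> 0"
  obtains \<alpha> where "\<alpha> > 0" "\<delta>*(2*\<alpha>+1) - (p-1)*\<alpha>^2 > 0" "2*\<alpha>+2-p > 0"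
    "(\<delta>+2*\<alpha>+1)/(\<delta>+p-1) \<le> S_pa \<delta> p"
    "(N + 1 + p) * (S_pa \<delta> p - (\<delta>+2*\<alpha>+1)/(\<delta>+p-1)) < p * S_pa \<delta> p - lam"
proof (cases "p = 2")
  case True
  define \<epsilon> where "\<epsilon> = (p * S_pa \<delta> p - lam) / (N + 1 + p)"
  have "\<epsilon> > 0" unfolding \<epsilon>_def using lam N p by simp
  then obtain \<alpha> where "\<alpha> > 0" "\<delta>*(2*\<alpha>+1) - \<alpha>^2 > 0" "(\<delta>+2*\<alpha>+1)/(\<delta>+1) \<le> S_pa \<delta> 2"
    "S_pa \<delta> 2 - (\<delta>+2*\<alpha>+1)/(\<delta>+1) < \<epsilon>"
    using exponent_choice_eq2[OF d] by blast
  with True N show thesis unfolding \<epsilon>_def by (intro that[of \<alpha>]) (auto simp: add.commute field_simps)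
next
  case False
  then have "p > 2" using p by simp
  from exponent_choice_gt2[OF this Pa d] lam N show thesis
    by (intro that[of "2*\<delta>/(p-1) - 1/2"]) auto
qed

lemma exists_cutoff_power:
  fixes a b p :: real
  assumes a: "0 < a" "a < b" and p: "p \<ge> 0"
  obtains k :: nat where "k \<ge> 2" "2*real k > p" "b/(b-a) * (2*real k - p - 2*real k*a/b) \<ge> 0"
proof -
  define S where "S = b/(b-a)"
  have S: "S \<ge> 1" unfolding S_def using a by (simp add: field_simps)
  define k where "k = nat \<lceil>p*S\<rceil> + 2"
  have k: "real k \<ge> p*S + 2" unfolding k_def by linarith
  have "p \<le> p*S" using S p by (simp add: mult_le_cancel_left1)
  then have kp: "2*real k > p" using k by linarith
  have "2*real k - 2*real k*a/b = 2*real k / S" unfolding S_def using a by (simp add: field_simps)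
  also have "2*real k / S \<ge> p" using k S p by (simp add: field_simps)
  finally have "S * (2*real k - p - 2*real k*a/b) \<ge> 0" using S by simp
  with kp show thesis unfolding S_def by (intro that[of k]) (auto simp: k_def)
qed

theorem theorem3p4:
  fixes w g :: "'a::euclidean_space \<Rightarrow> real"
    and p \<delta> \<gamma> lam C :: real
  assumes p: "p \<ge> 2"
    and w_loc: "\<forall>K. compact K \<longrightarrow> set_integrable lebesgue K w"
    and g_loc: "\<forall>K. compact K \<longrightarrow> set_integrable lebesgue K g"
    and w_pos: "AE x in lebesgue. 0 < w x"
    and g_pos: "AE x in lebesgue. 0 < g x"
    and g_inv: "\<exists>M. AE x in lebesgue. \<bar>1 / g x\<bar> \<le> M"
    and dg: "\<gamma> = \<delta>" and d1: "\<delta> \<ge> 1"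
    and Pa: "class_Pa \<delta> p"
    and lam_pos: "lam > 0" and Cpos: "C > 0" and lamS: "lam < p * S_pa \<delta> p"
    and growth: "\<forall>R\<ge>1. (\<integral>\<^sup>+ x \<in> ball 0 (2 * R). ennreal (w x powr S_pa \<delta> p) \<partial>lebesgue)
                        \<le> ennreal (C * R powr lam)"
  shows "\<not> (\<exists>u. C1_fun u \<and> (\<forall>x. 0 < u x) \<and>
              weak_solution p \<delta> \<gamma> w g u \<and> stable_solution p \<delta> \<gamma> w g u)"
proof
  assume "\<exists>u. C1_fun u \<and> (\<forall>x. 0 < u x) \<and> weak_solution p \<delta> \<gamma> w g u \<and> stable_solution p \<delta> \<gamma> w g u"
  then obtain u where u: "C1_fun u" "\<forall>x. 0 < u x"
    and sol: "weak_solution p \<delta> \<delta> w g u" "stable_solution p \<delta> \<delta> w g u"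
    using dg by blast
  from g_inv obtain M0 where "AE x in lebesgue. \<bar>1 / g x\<bar> \<le> M0" by blast
  then have gM: "AE x in lebesgue. 1 / g x \<le> max M0 1"
    by (rule eventually_mono) (use abs_ge_self in \<open>smt (verit)\<close>)
  obtain \<alpha> where \<alpha>: "\<alpha> > 0" "\<delta>*(2*\<alpha>+1) - (p-1)*\<alpha>^2 > 0" "2*\<alpha>+2-p > 0"
    and S: "(\<delta>+2*\<alpha>+1)/(\<delta>+p-1) \<le> S_pa \<delta> p"
    and cond: "(real DIM('a) + 1 + p) * (S_pa \<delta> p - (\<delta>+2*\<alpha>+1)/(\<delta>+p-1)) < p * S_pa \<delta> p - lam"
    using exists_exponent[OF p Pa d1 lamS, of "real DIM('a)"] by auto
  have ab: "2*\<alpha>+2-p < \<delta>+2*\<alpha>+1" using p d1 by simp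
  obtain k where k: "k \<ge> 2" "2*real k > p"
    "(\<delta>+2*\<alpha>+1)/((\<delta>+2*\<alpha>+1)-(2*\<alpha>+2-p)) * (2*real k - p - 2*real k*(2*\<alpha>+2-p)/(\<delta>+2*\<alpha>+1)) \<ge> 0"
    by (rule exists_cutoff_power[OF \<alpha>(3) ab, of p]) (use p in auto)
  interpret positive_solution_setting u w g p \<delta> \<alpha> k
    by unfold_locales (use u w_loc g_loc p k in auto)
  interpret stable_solution_setting u w g p \<delta> \<alpha> k "max M0 1"
    by unfold_locales (use sol w_pos g_pos gM \<alpha> ab k in \<open>auto simp: a_exp_def b_exp_def S_exp_def\<close>)
  have "S_exp = (\<delta>+2*\<alpha>+1)/(\<delta>+p-1)" unfolding S_exp_def a_exp_def b_exp_def by simp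
  with S cond show False by (intro weight_growth_contradiction[OF growth Cpos]) auto
qed

end
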